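(* Let $(\Omega,\mathfrak S,\mathbb P,\{T_z:z\in\mathcal G\})$ be a measurable ergodic dynamical system and $\ell\ge0$. Let $g_k,g:\Omega\times\mathcal R^\ell\to\mathbb R$ be measurable with $g_k(\cdot,z_{1,\ell}),g(\cdot,z_{1,\ell})\in L^1(\mathbb P)$ and $g_k(\cdot,z_{1,\ell})\to g(\cdot,z_{1,\ell})$ in $L^1(\mathbb P)$ as $k\to\infty$, for each $z_{1,\ell}\in\mathcal R^\ell$. Then \[\underline K_\ell(g)\le\liminf_{k\to\infty}\underline K_\ell(g_k).\]
   Context: Fix $d$, finite $\mathcal R\subset\mathbb Z^d$, $\mathcal G$ the additive subgroup generated by $\mathcal R$; $T_z$ measurable commuting bijections with $T_{x+y}=T_xT_y$, $T_0=\mathrm{id}$, $\mathbb P$ invariant and ergodic. $\Omega_\ell=\Omega\times\mathcal R^\ell$, $\eta=(\omega,z_{1,\ell})$, $z_{i,j}=(z_i,\dots,z_j)$; $S_z(\omega,z_{1,\ell})=(T_{z_1}\omega,(z_{2,\ell},z))$ ($S_z\omega=T_z\omega$ if $\ell=0$). Class $\mathcal K$: measurable $F:\Omega_\ell\times\mathcal R\to\mathbb R$ with (i) $F(\cdot,z_{1,\ell},z)\in L^1(\mathbb P)$; (ii) for all $n\ge\ell$, $a_{1,n}\in\mathcal R^n$, $\eta_0=(\omega,a_{n-\ell+1,n})$, $\eta_i=S_{a_i}\eta_{i-1}$: $\mathbb E\sum_{i<n}F(\eta_i,a_{i+1})=0$; (iii) for a.e. $\omega$, any two step sequences from a common $\eta_0=(\omega,z_{1,\ell})$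 reaching the same point give equal sums $\sum F(\eta_i,a_{i+1})$. For $g$ with integrable sections, $K_{\ell,F}(g)=\mathbb P\text{-}\operatorname{ess\,sup}_\omega\max_{z_{1,\ell}}\log\sum_{z\in\mathcal R}|\mathcal R|^{-1}e^{g(\eta)+F(\eta,z)}$ and $\underline K_\ell(g)=\inf_{F\in\mathcal K}K_{\ell,F}(g)$. *)

theory Defs
  imports "HOL-Probability.Probability"
begin

text \<open>Points of Z^d are represented by the type int^'d (d = CARD('d) fixed).
  States eta = (omega, z_{1,l}) of Omega_l are pairs with a list of length l.\<close>

inductive_set gen_group :: "('z::ab_group_add) set \<Rightarrow> 'z set" for R where
  gg_zero: "0 \<in> gen_group R"
| gg_base: "x \<in> R \<Longrightarrow> x \<in> gen_group R"
| gg_add: "x \<in> gen_group R \<Longrightarrow> y \<in> gen_group R \<Longrightarrow> x + y \<in> gen_group R"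
| gg_neg: "x \<in> gen_group R \<Longrightarrow> - x \<in> gen_group R"

definition ergodic_system :: "'a measure \<Rightarrow> (int^'d \<Rightarrow> 'a \<Rightarrow> 'a) \<Rightarrow> (int^'d) set \<Rightarrow> bool" where
  "ergodic_system M T R \<longleftrightarrow>
     prob_space M \<and>
     (\<forall>z\<in>gen_group R. T z \<in> M \<rightarrow>\<^sub>M M \<and> bij_betw (T z) (space M) (space M)
                       \<and> distr M M (T z) = M) \<and>
     (\<forall>\<omega>\<in>space M. T 0 \<omega> = \<omega>) \<and>
     (\<forall>x\<in>gen_group R. \<forall>y\<in>gen_group R. \<forall>\<omega>\<in>space M. T (x + y) \<omega> = T x (T y \<omega>)) \<and>
     (\<forall>x\<in>gen_group R. \<forall>y\<in>gen_group R. \<forall>\<omega>\<in>space M. T x (T y \<omega>) = T y (T x \<omega>)) \<and>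
     (\<forall>A\<in>sets M. (\<forall>z\<in>gen_group R. T z -` A \<inter> space M = A) \<longrightarrow>
                  measure M A = 0 \<or> measure M A = 1)"

definition Sshift :: "(int^'d \<Rightarrow> 'a \<Rightarrow> 'a) \<Rightarrow> int^'d \<Rightarrow> 'a \<times> (int^'d) list \<Rightarrow> 'a \<times> (int^'d) list" where
  "Sshift T z \<eta> = (case snd \<eta> of [] \<Rightarrow> (T z (fst \<eta>), [])
                                  | (z1 # zs) \<Rightarrow> (T z1 (fst \<eta>), zs @ [z]))"

fun endpt :: "(int^'d \<Rightarrow> 'a \<Rightarrow> 'a) \<Rightarrow> 'a \<times> (int^'d) list \<Rightarrow> (int^'d) list \<Rightarrow> 'a \<times> (int^'d) list" where
  "endpt T \<eta> [] = \<eta>"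
| "endpt T \<eta> (a # as) = endpt T (Sshift T a \<eta>) as"

fun pathsum :: "(int^'d \<Rightarrow> 'a \<Rightarrow> 'a) \<Rightarrow> ('a \<times> (int^'d) list \<Rightarrow> int^'d \<Rightarrow> real)
                 \<Rightarrow> 'a \<times> (int^'d) list \<Rightarrow> (int^'d) list \<Rightarrow> real" where
  "pathsum T F \<eta> [] = 0"
| "pathsum T F \<eta> (a # as) = F \<eta> a + pathsum T F (Sshift T a \<eta>) as"

definition classK :: "'a measure \<Rightarrow> (int^'d \<Rightarrow> 'a \<Rightarrow> 'a) \<Rightarrow> (int^'d) set \<Rightarrow> nat
                       \<Rightarrow> ('a \<times> (int^'d) list \<Rightarrow> int^'d \<Rightarrow> real) \<Rightarrow> bool" where
  "classK M T R l F \<longleftrightarrow>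
     (\<forall>zs z. zs \<in> lists R \<and> length zs = l \<and> z \<in> R \<longrightarrow> integrable M (\<lambda>\<omega>. F (\<omega>, zs) z)) \<and>
     (\<forall>n as. l \<le> n \<and> as \<in> lists R \<and> length as = n \<longrightarrow>
         (\<integral>\<omega>. pathsum T F (\<omega>, drop (n - l) as) as \<partial>M) = 0) \<and>
     (AE \<omega> in M. \<forall>zs as bs. zs \<in> lists R \<and> length zs = l \<and> as \<in> lists R \<and> bs \<in> lists R \<and>
         endpt T (\<omega>, zs) as = endpt T (\<omega>, zs) bs \<longrightarrow>
         pathsum T F (\<omega>, zs) as = pathsum T F (\<omega>, zs) bs)"

definition KlF :: "'a measure \<Rightarrow> (int^'d) set \<Rightarrow> nat \<Rightarrow> ('a \<times> (int^'d) list \<Rightarrow> int^'d \<Rightarrow> real)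
                   \<Rightarrow> ('a \<times> (int^'d) list \<Rightarrow> real) \<Rightarrow> ereal" where
  "KlF M R l F g = esssup M (\<lambda>\<omega>. ereal (Max ((\<lambda>zs. ln (\<Sum>z\<in>R. exp (g (\<omega>, zs) + F (\<omega>, zs) z) / real (card R)))
                                          ` {zs. zs \<in> lists R \<and> length zs = l})))"

definition underK :: "'a measure \<Rightarrow> (int^'d \<Rightarrow> 'a \<Rightarrow> 'a) \<Rightarrow> (int^'d) set \<Rightarrow> nat
                      \<Rightarrow> ('a \<times> (int^'d) list \<Rightarrow> real) \<Rightarrow> ereal" where
  "underK M T R l g = (INF F \<in> {F. classK M T R l F}. KlF M R l F g)"

end

theory Submission
  imports Defs
begin

(* Fix c above the liminf. Along a subsequence there are cocycles F_k in K with K_{l,F_k}(g_k) < c,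
   i.e. almost surely the mean over z in R of exp (g_k + F_k(.,z)) is at most e^c; in particular
   g_k + F_k <= c + ln |R|, and the mean-zero condition along a closed path then bounds the means of
   F_k, so along a further subsequence these means converge and g_k -> g almost surely.
   A Komlos-type argument yields tail convex combinations of the F_k converging almost surely to
   some F; by Fatou its means dominate the limiting means, and by Jensen (g, F) still satisfies the
   exponential bound. F is path independent, and subtracting the deterministic excess of its means
   restores the mean-zero condition; by ergodicity this correction is itself path independent.
   Hence the corrected F lies in K and K_{l,F}(g) <= c. *)

lemma ergodic_system_prob_space: "ergodic_system M T R \<Longrightarrow> prob_space M"
  by (simp add: ergodic_system_def)

lemma ergodic_system_shift:
  assumes "ergodic_system M T R" "z \<in> gen_group R"
  shows "T z \<in> M \<rightarrow>\<^sub>M M" "distr M M (T z) = M" "inj_on (T z) (space M)"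
    "\<And>\<omega>. \<omega> \<in> space M \<Longrightarrow> T z \<omega> \<in> space M"
  using assms unfolding ergodic_system_def bij_betw_def by (auto simp: measurable_space)

lemma ergodic_system_commute:
  "ergodic_system M T R \<Longrightarrow> x \<in> gen_group R \<Longrightarrow> y \<in> gen_group R \<Longrightarrow> \<omega> \<in> space M \<Longrightarrow>
    T x (T y \<omega>) = T y (T x \<omega>)"
  unfolding ergodic_system_def by blast

lemma ergodic_system_add:
  "ergodic_system M T R \<Longrightarrow> x \<in> gen_group R \<Longrightarrow> y \<in> gen_group R \<Longrightarrow> \<omega> \<in> space M \<Longrightarrow>
    T (x + y) \<omega> = T x (T y \<omega>)"
  unfolding ergodic_system_def by blast

lemma ergodic_system_zero: "ergodic_system M T R \<Longrightarrow> \<omega> \<in> space M \<Longrightarrow> T 0 \<omega> = \<omega>"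
  unfolding ergodic_system_def by blast

lemma ergodic_system_AE_shift:
  assumes es: "ergodic_system M T R" and z: "z \<in> gen_group R" and P: "AE \<omega> in M. P \<omega>"
  shows "AE \<omega> in M. P (T z \<omega>)"
proof (rule AE_distrD[OF ergodic_system_shift(1)[OF es z]])
  show "AE \<omega> in distr M M (T z). P \<omega>" by (subst ergodic_system_shift(2)[OF es z]) (rule P)
qed

lemma ergodic_system_invariant_kernel:
  assumes es: "ergodic_system M T R" and Z: "Z \<in> sets M"
  defines "H \<equiv> \<Inter>z\<in>gen_group R. T z -` Z \<inter> space M"
  shows "H \<in> sets M" "H \<subseteq> Z" "\<forall>w\<in>gen_group R. T w -` H \<inter> space M = H"
proof -
  show "H \<in> sets M" unfolding H_def
    by (rule sets.countable_INT') (auto intro: gen_group.gg_zero measurable_sets[OF ergodic_system_shift(1)[OF es] Z])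
  show "H \<subseteq> Z" unfolding H_def using ergodic_system_zero[OF es] gen_group.gg_zero[of R] by auto
  have Hsp: "H \<subseteq> space M" unfolding H_def using gen_group.gg_zero[of R] by auto
  show "\<forall>w\<in>gen_group R. T w -` H \<inter> space M = H"
  proof
    fix w assume w: "w \<in> gen_group R"
    show "T w -` H \<inter> space M = H"
    proof (intro equalityI subsetI)
      fix x assume x: "x \<in> T w -` H \<inter> space M"
      show "x \<in> H" unfolding H_def
      proof (rule INT_I)
        fix z assume z: "z \<in> gen_group R"
        have z': "z + - w \<in> gen_group R" using z w by (intro gen_group.gg_add gen_group.gg_neg)
        have "T (z + - w) (T w x) \<in> Z" using x z' unfolding H_def by blast
        moreover have "T (z + - w) (T w x) = T z x"
          using ergodic_system_add[OF es z' w, of x] x by simp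
        ultimately show "x \<in> T z -` Z \<inter> space M" using x by simp
      qed
    next
      fix x assume x: "x \<in> H"
      have xs: "x \<in> space M" using x Hsp by auto
      have "T w x \<in> H" unfolding H_def
      proof (rule INT_I)
        fix z assume z: "z \<in> gen_group R"
        have "T (z + w) x \<in> Z" using x z w unfolding H_def by (blast intro: gen_group.gg_add)
        then show "T w x \<in> T z -` Z \<inter> space M"
          using ergodic_system_add[OF es z w xs] ergodic_system_shift(4)[OF es w xs] by simp
      qed
      then show "x \<in> T w -` H \<inter> space M" using xs by auto
    qed
  qed
qed

lemma ergodic_system_null_or_AE_zero:
  assumes es: "ergodic_system M T R"
    and inv: "\<And>z \<omega>. z \<in> gen_group R \<Longrightarrow> \<omega> \<in> space M \<Longrightarrow> T z \<omega> \<in> S \<longleftrightarrow> \<omega> \<in> S"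
    and \<Delta>[measurable]: "\<Delta> \<in> borel_measurable M" and ae: "AE \<omega> in M. \<omega> \<in> S \<longrightarrow> \<Delta> \<omega> = 0"
  shows "(AE \<omega> in M. \<omega> \<notin> S) \<or> (AE \<omega> in M. \<Delta> \<omega> = (0::real))"
proof -
  interpret prob_space M using ergodic_system_prob_space[OF es] .
  from ae obtain N where N: "{\<omega>\<in>space M. \<not> (\<omega> \<in> S \<longrightarrow> \<Delta> \<omega> = 0)} \<subseteq> N" "N \<in> null_sets M"
    by (auto elim!: AE_E)
  define Z where "Z = {\<omega>\<in>space M. \<Delta> \<omega> = 0} \<union> N"
  have Z: "Z \<in> sets M" unfolding Z_def using N(2) by auto
  define H where "H = (\<Inter>z\<in>gen_group R. T z -` Z \<inter> space M)"
  note H = ergodic_system_invariant_kernel[OF es Z, folded H_def]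
  have SH: "S \<inter> space M \<subseteq> H"
  proof
    fix x assume x: "x \<in> S \<inter> space M"
    show "x \<in> H" unfolding H_def
    proof (rule INT_I)
      fix z assume z: "z \<in> gen_group R"
      have "T z x \<in> space M" "T z x \<in> S" using ergodic_system_shift(4)[OF es z] inv[OF z] x by auto
      then show "x \<in> T z -` Z \<inter> space M" unfolding Z_def using N(1) x by auto
    qed
  qed
  have "measure M H = 0 \<or> measure M H = 1" using es H(1,3) unfolding ergodic_system_def by blast
  then show ?thesis
  proof
    assume "measure M H = 0"
    then have "AE \<omega> in M. \<omega> \<notin> H" using H(1) by (intro AE_not_in) (simp add: emeasure_eq_measure null_sets_def)
    with AE_space have "AE \<omega> in M. \<omega> \<notin> S" by eventually_elim (use SH in auto)
    then show ?thesis ..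
  next
    assume "measure M H = 1"
    then have "AE \<omega> in M. \<omega> \<in> H" using AE_in_set_eq_1[OF H(1)] by simp
    moreover have "AE \<omega> in M. \<omega> \<notin> N" using N(2) by (rule AE_not_in)
    ultimately have "AE \<omega> in M. \<Delta> \<omega> = 0" by eventually_elim (use H(2) Z_def in auto)
    then show ?thesis ..
  qed
qed

section \<open>Windows and path sums\<close>

definition shift_dir :: "'z \<Rightarrow> 'z list \<Rightarrow> 'z" where
  "shift_dir a zs = (case zs of [] \<Rightarrow> a | z1 # _ \<Rightarrow> z1)"

definition shift_window :: "'z \<Rightarrow> 'z list \<Rightarrow> 'z list" where
  "shift_window a zs = (case zs of [] \<Rightarrow> [] | _ # zs' \<Rightarrow> zs' @ [a])"

fun window_pathsum :: "('z list \<Rightarrow> 'z \<Rightarrow> real) \<Rightarrow> 'z list \<Rightarrow> 'z list \<Rightarrow> real" where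
  "window_pathsum m zs [] = 0"
| "window_pathsum m zs (a # as) = m zs a + window_pathsum m (shift_window a zs) as"

lemma Sshift_eq: "Sshift T a (\<omega>, zs) = (T (shift_dir a zs) \<omega>, shift_window a zs)"
  by (cases zs) (auto simp: Sshift_def shift_dir_def shift_window_def)

lemma shift_dir_in: "zs \<in> lists R \<Longrightarrow> a \<in> R \<Longrightarrow> shift_dir a zs \<in> R"
  by (cases zs) (auto simp: shift_dir_def)

lemma shift_dir_in_gen_group: "zs \<in> lists R \<Longrightarrow> a \<in> R \<Longrightarrow> shift_dir a zs \<in> gen_group R"
  by (rule gen_group.gg_base[OF shift_dir_in])

lemma shift_window_in_lists: "zs \<in> lists R \<Longrightarrow> a \<in> R \<Longrightarrow> shift_window a zs \<in> lists R"
  by (cases zs) (auto simp: shift_window_def)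

lemma length_shift_window [simp]: "length (shift_window a zs) = length zs"
  by (cases zs) (auto simp: shift_window_def)

lemma finite_windows: "finite R \<Longrightarrow> finite {zs. zs \<in> lists R \<and> length zs = l}"
  using finite_lists_length_eq[of R l] by (simp add: lists_eq_set)

lemma windows_nonempty: "R \<noteq> {} \<Longrightarrow> {zs. zs \<in> lists R \<and> length zs = l} \<noteq> {}"
proof -
  assume "R \<noteq> {}"
  then obtain r where "r \<in> R" by blast
  then have "replicate l r \<in> {zs. zs \<in> lists R \<and> length zs = l}" by auto
  then show ?thesis by blast
qed

lemma pathsum_Cons_shift:
  "pathsum T F (\<omega>, zs) (a # as) = F (\<omega>, zs) a + pathsum T F (T (shift_dir a zs) \<omega>, shift_window a zs) as"
  by (simp add: Sshift_eq)

lemma pathsum_sum: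
  "pathsum T (\<lambda>\<eta> z. \<Sum>k\<in>S. c k * F k \<eta> z) \<eta> as = (\<Sum>k\<in>S. c k * pathsum T (F k) \<eta> as)"
  by (induction as arbitrary: \<eta>) (auto simp: sum.distrib algebra_simps sum_distrib_left)

lemma pathsum_diff:
  "pathsum T (\<lambda>\<eta> z. F \<eta> z - H \<eta> z) \<eta> as = pathsum T F \<eta> as - pathsum T H \<eta> as"
  by (induction as arbitrary: \<eta>) auto

lemma pathsum_window_fun: "pathsum T (\<lambda>\<eta> z. m (snd \<eta>) z) (\<omega>, zs) as = window_pathsum m zs as"
  by (induction as arbitrary: \<omega> zs) (auto simp: Sshift_eq)

lemma fst_endpt_in_space:
  assumes es: "ergodic_system M T R" and "\<omega> \<in> space M" "zs \<in> lists R" "as \<in> lists R"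
  shows "fst (endpt T (\<omega>, zs) as) \<in> space M"
  using assms(2-)
proof (induction as arbitrary: \<omega> zs)
  case (Cons a as)
  have "T (shift_dir a zs) \<omega> \<in> space M"
    using ergodic_system_shift(4)[OF es shift_dir_in_gen_group] Cons.prems by auto
  then show ?case using Cons shift_window_in_lists[of zs R a] by (simp add: Sshift_eq)
qed simp

lemma endpt_shift:
  assumes es: "ergodic_system M T R" and "\<omega> \<in> space M" "zs \<in> lists R" "as \<in> lists R"
    and z: "z \<in> gen_group R"
  shows "endpt T (T z \<omega>, zs) as = (T z (fst (endpt T (\<omega>, zs) as)), snd (endpt T (\<omega>, zs) as))"
  using assms(2-4)
proof (induction as arbitrary: \<omega> zs)
  case (Cons a as)
  have w: "shift_dir a zs \<in> gen_group R" using Cons.prems by (auto intro: shift_dir_in_gen_group)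
  have "T (shift_dir a zs) (T z \<omega>) = T z (T (shift_dir a zs) \<omega>)"
    using ergodic_system_commute[OF es w z Cons.prems(1)] .
  moreover have "T (shift_dir a zs) \<omega> \<in> space M" using ergodic_system_shift(4)[OF es w Cons.prems(1)] .
  ultimately show ?case using Cons shift_window_in_lists[of zs R a] by (simp add: Sshift_eq)
qed simp

lemma window_pathsum_cong:
  assumes "\<And>zs z. zs \<in> lists R \<Longrightarrow> length zs = l \<Longrightarrow> z \<in> R \<Longrightarrow> m zs z = m' zs z"
    and "as \<in> lists R" "zs \<in> lists R" "length zs = l"
  shows "window_pathsum m zs as = window_pathsum m' zs as"
  using assms(2-)
proof (induction as arbitrary: zs)
  case (Cons a as)
  then show ?case using assms(1) shift_window_in_lists[of zs R a] by auto
qed simp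

lemma window_pathsum_diff:
  "window_pathsum (\<lambda>zs z. m zs z - m' zs z) zs as = window_pathsum m zs as - window_pathsum m' zs as"
  by (induction as arbitrary: zs) auto

lemma window_pathsum_tendsto:
  assumes "\<And>zs z. zs \<in> lists R \<Longrightarrow> length zs = l \<Longrightarrow> z \<in> R \<Longrightarrow> (\<lambda>k. m k zs z) \<longlonglongrightarrow> m' zs z"
    and "as \<in> lists R" "zs \<in> lists R" "length zs = l"
  shows "(\<lambda>k. window_pathsum (m k) zs as) \<longlonglongrightarrow> window_pathsum m' zs as"
  using assms(2-)
proof (induction as arbitrary: zs)
  case (Cons a as)
  then have "(\<lambda>k. window_pathsum (m k) (shift_window a zs) as) \<longlonglongrightarrow> window_pathsum m' (shift_window a zs) as"
    using shift_window_in_lists[of zs R a] by simp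
  moreover have "(\<lambda>k. m k zs a) \<longlonglongrightarrow> m' zs a" using Cons assms(1) by simp
  ultimately show ?case by (simp add: tendsto_add)
qed simp

lemma window_pathsum_le:
  assumes "\<And>zs z. zs \<in> lists R \<Longrightarrow> length zs = l \<Longrightarrow> z \<in> R \<Longrightarrow> m zs z \<le> B"
    and "as \<in> lists R" "zs \<in> lists R" "length zs = l"
  shows "window_pathsum m zs as \<le> real (length as) * B"
  using assms(2-)
proof (induction as arbitrary: zs)
  case (Cons a as)
  then have "window_pathsum m (shift_window a zs) as \<le> real (length as) * B"
    using shift_window_in_lists[of zs R a] by simp
  moreover have "m zs a \<le> B" using Cons assms(1) by simp
  ultimately show ?case by (simp add: algebra_simps)
qed simp

lemma pathsum_integral:
  assumes es: "ergodic_system M T R"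
    and H: "\<And>zs z. zs \<in> lists R \<Longrightarrow> length zs = l \<Longrightarrow> z \<in> R \<Longrightarrow> integrable M (\<lambda>\<omega>. H (\<omega>, zs) z)"
    and "as \<in> lists R" "zs \<in> lists R" "length zs = l"
  shows "integrable M (\<lambda>\<omega>. pathsum T H (\<omega>, zs) as) \<and>
     (\<integral>\<omega>. pathsum T H (\<omega>, zs) as \<partial>M) = window_pathsum (\<lambda>zs z. \<integral>\<omega>. H (\<omega>, zs) z \<partial>M) zs as"
  using assms(3-)
proof (induction as arbitrary: zs)
  case (Cons a as)
  have a: "a \<in> R" and as: "as \<in> lists R" using Cons by auto
  have w: "shift_dir a zs \<in> gen_group R" using shift_dir_in_gen_group[OF Cons.prems(1) a] .
  define f where "f = (\<lambda>\<omega>. pathsum T H (\<omega>, shift_window a zs) as)"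
  from Cons.IH[OF shift_window_in_lists[OF Cons.prems(1) a]] Cons.prems(2)
  have fi: "integrable M f"
    and fI: "integral\<^sup>L M f = window_pathsum (\<lambda>zs z. \<integral>\<omega>. H (\<omega>, zs) z \<partial>M) (shift_window a zs) as"
    unfolding f_def by auto
  note T = ergodic_system_shift(1,2)[OF es w]
  have fm: "f \<in> borel_measurable M" using fi by auto
  have "integrable M (\<lambda>\<omega>. f (T (shift_dir a zs) \<omega>))"
    using integrable_distr_eq[OF T(1) fm] fi T(2) by simp
  moreover have "(\<integral>\<omega>. f (T (shift_dir a zs) \<omega>) \<partial>M) = integral\<^sup>L M f"
    using integral_distr[OF T(1) fm] T(2) by simp
  moreover have "integrable M (\<lambda>\<omega>. H (\<omega>, zs) a)" using H[OF Cons.prems(1,2) a] .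
  moreover have "(\<lambda>\<omega>. pathsum T H (\<omega>, zs) (a # as)) = (\<lambda>\<omega>. H (\<omega>, zs) a + f (T (shift_dir a zs) \<omega>))"
    unfolding f_def by (simp add: Sshift_eq)
  ultimately show ?case using fI by simp
qed simp

lemma AE_pathsum_tendsto:
  assumes es: "ergodic_system M T R" and fR: "finite R"
    and conv: "AE \<omega> in M. \<forall>zs z. zs \<in> lists R \<and> length zs = l \<and> z \<in> R \<longrightarrow>
                 (\<lambda>n. F n (\<omega>, zs) z) \<longlonglongrightarrow> H (\<omega>, zs) z"
    and "as \<in> lists R"
  shows "AE \<omega> in M. \<forall>zs. zs \<in> lists R \<and> length zs = l \<longrightarrow>
      (\<lambda>n. pathsum T (F n) (\<omega>, zs) as) \<longlonglongrightarrow> pathsum T H (\<omega>, zs) as"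
  using assms(4)
proof (induction as)
  case (Cons a as)
  have a: "a \<in> R" and as: "as \<in> lists R" using Cons by auto
  have "AE \<omega> in M. \<forall>w\<in>R. \<forall>zs. zs \<in> lists R \<and> length zs = l \<longrightarrow>
      (\<lambda>n. pathsum T (F n) (T w \<omega>, zs) as) \<longlonglongrightarrow> pathsum T H (T w \<omega>, zs) as"
  proof (rule AE_finite_allI[OF fR])
    fix w assume "w \<in> R"
    then show "AE \<omega> in M. \<forall>zs. zs \<in> lists R \<and> length zs = l \<longrightarrow>
      (\<lambda>n. pathsum T (F n) (T w \<omega>, zs) as) \<longlonglongrightarrow> pathsum T H (T w \<omega>, zs) as"
      using ergodic_system_AE_shift[OF es gen_group.gg_base Cons.IH] by simp
  qed
  then show ?case using conv
  proof eventually_elim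
    case (elim \<omega>)
    show ?case
    proof (intro allI impI)
      fix zs assume zs: "zs \<in> lists R \<and> length zs = l"
      have "(\<lambda>n. pathsum T (F n) (T (shift_dir a zs) \<omega>, shift_window a zs) as)
              \<longlonglongrightarrow> pathsum T H (T (shift_dir a zs) \<omega>, shift_window a zs) as"
        using elim(1) zs a shift_dir_in[of zs R a] shift_window_in_lists[of zs R a] by auto
      moreover have "(\<lambda>n. F n (\<omega>, zs) a) \<longlonglongrightarrow> H (\<omega>, zs) a" using elim(2) zs a by blast
      ultimately show "(\<lambda>n. pathsum T (F n) (\<omega>, zs) (a # as)) \<longlonglongrightarrow> pathsum T H (\<omega>, zs) (a # as)"
        unfolding pathsum_Cons_shift by (rule tendsto_add[rotated])
    qed
  qed
qed simp

section \<open>Tail convex combinations\<close>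

(* tail_weights n L: L is a finitely supported probability vector on {n, n+1, ...}, so that
   wsum L x is a convex combination of the tail x n, x (n+1), ... of the sequence x. *)

definition tail_weights :: "nat \<Rightarrow> (nat \<Rightarrow> real) \<Rightarrow> bool" where
  "tail_weights n L \<longleftrightarrow> finite {k. L k \<noteq> 0} \<and> (\<forall>k. 0 \<le> L k) \<and> (\<forall>k<n. L k = 0) \<and>
     sum L {k. L k \<noteq> 0} = 1"

definition wsum :: "(nat \<Rightarrow> real) \<Rightarrow> (nat \<Rightarrow> real) \<Rightarrow> real" where
  "wsum L x = (\<Sum>k\<in>{k. L k \<noteq> 0}. L k * x k)"

lemma wsum_superset: "finite S \<Longrightarrow> {k. L k \<noteq> 0} \<subseteq> S \<Longrightarrow> wsum L x = (\<Sum>k\<in>S. L k * x k)"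
  unfolding wsum_def by (rule sum.mono_neutral_left) auto

lemma tail_weights_sum_superset:
  assumes "tail_weights n L" "finite S" "{k. L k \<noteq> 0} \<subseteq> S"
  shows "sum L S = 1"
proof -
  have "sum L {k. L k \<noteq> 0} = sum L S" by (rule sum.mono_neutral_left) (use assms in auto)
  then show ?thesis using assms(1) unfolding tail_weights_def by simp
qed

lemma tail_weights_mono: "tail_weights n L \<Longrightarrow> m \<le> n \<Longrightarrow> tail_weights m L"
  unfolding tail_weights_def by auto

lemma tail_weights_subseq: "tail_weights (r n) L \<Longrightarrow> strict_mono r \<Longrightarrow> tail_weights n L"
  using tail_weights_mono seq_suble by blast

lemma tail_weights_point: "tail_weights n (\<lambda>k. if k = n then 1 else 0)"
  unfolding tail_weights_def by auto

lemma tail_weights_midpoint: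
  assumes "tail_weights n L" "tail_weights n L'"
  shows "tail_weights n (\<lambda>k. (L k + L' k) / 2)"
    and "wsum (\<lambda>k. (L k + L' k) / 2) x = (wsum L x + wsum L' x) / 2"
proof -
  let ?S = "{k. L k \<noteq> 0} \<union> {k. L' k \<noteq> 0}"
  have S: "finite ?S" using assms unfolding tail_weights_def by auto
  have supp: "{k. (L k + L' k) / 2 \<noteq> 0} = ?S"
    using assms unfolding tail_weights_def by (auto simp: add_nonneg_eq_0_iff)
  have "sum L ?S = 1" "sum L' ?S = 1"
    using tail_weights_sum_superset[OF assms(1) S] tail_weights_sum_superset[OF assms(2) S] by auto
  then have "sum (\<lambda>k. (L k + L' k) / 2) ?S = 1" by (simp add: sum.distrib sum_divide_distrib[symmetric])
  then show "tail_weights n (\<lambda>k. (L k + L' k) / 2)"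
    using assms S supp unfolding tail_weights_def by auto
  show "wsum (\<lambda>k. (L k + L' k) / 2) x = (wsum L x + wsum L' x) / 2"
    using wsum_superset[OF S, of L x] wsum_superset[OF S, of L' x] wsum_superset[OF S, of _ x] supp
    by (simp add: sum.distrib sum_divide_distrib[symmetric] algebra_simps)
qed

lemma wsum_add: "wsum L (\<lambda>k. x k + y k) = wsum L x + wsum L y"
  unfolding wsum_def by (simp add: sum.distrib algebra_simps)

lemma wsum_diff: "wsum L (\<lambda>k. x k - y k) = wsum L x - wsum L y"
  unfolding wsum_def by (simp add: sum_subtractf algebra_simps)

lemma wsum_divide: "wsum L (\<lambda>k. x k / d) = wsum L x / d"
  unfolding wsum_def by (simp add: sum_divide_distrib)

lemma wsum_sum: "wsum L (\<lambda>k. \<Sum>i\<in>A. x k i) = (\<Sum>i\<in>A. wsum L (\<lambda>k. x k i))"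
  unfolding wsum_def by (simp add: sum_distrib_left sum.swap[of _ A])

lemma wsum_const: "tail_weights n L \<Longrightarrow> wsum L (\<lambda>k. c) = c"
  unfolding wsum_def tail_weights_def by (simp add: sum_distrib_right[symmetric])

lemma wsum_const_diff: "tail_weights n L \<Longrightarrow> wsum L (\<lambda>k. c - x k) = c - wsum L x"
  using wsum_diff[of L "\<lambda>k. c" x] wsum_const by simp

lemma wsum_mono: "tail_weights n L \<Longrightarrow> (\<And>k. n \<le> k \<Longrightarrow> x k \<le> y k) \<Longrightarrow> wsum L x \<le> wsum L y"
  unfolding wsum_def tail_weights_def
  by (intro sum_mono mult_left_mono) (auto, meson not_le)

lemma wsum_nonneg: "tail_weights n L \<Longrightarrow> (\<And>k. 0 \<le> x k) \<Longrightarrow> 0 \<le> wsum L x"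
  unfolding wsum_def tail_weights_def by (intro sum_nonneg) auto

lemma wsum_abs_diff_le:
  assumes "tail_weights n L"
  shows "\<bar>wsum L x - c\<bar> \<le> wsum L (\<lambda>k. \<bar>x k - c\<bar>)"
proof -
  have "\<bar>wsum L x - c\<bar> = \<bar>wsum L (\<lambda>k. x k - c)\<bar>" using wsum_diff[of L x] wsum_const[OF assms] by simp
  also have "\<dots> \<le> wsum L (\<lambda>k. \<bar>x k - c\<bar>)"
    unfolding wsum_def using assms unfolding tail_weights_def
    by (rule_tac order_trans[OF sum_abs]) (auto intro!: sum_mono simp: abs_mult)
  finally show ?thesis .
qed

lemma wsum_tendsto:
  assumes "\<And>n. tail_weights n (L n)" "x \<longlonglongrightarrow> c"
  shows "(\<lambda>n. wsum (L n) x) \<longlonglongrightarrow> c"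
proof (rule LIMSEQ_I)
  fix r :: real assume r: "0 < r"
  from LIMSEQ_D[OF assms(2) half_gt_zero[OF r]] obtain N where N: "\<And>n. n \<ge> N \<Longrightarrow> \<bar>x n - c\<bar> < r / 2"
    by auto
  have "\<bar>wsum (L n) x - c\<bar> \<le> r / 2" if "N \<le> n" for n
  proof -
    have "\<bar>wsum (L n) x - c\<bar> \<le> wsum (L n) (\<lambda>k. \<bar>x k - c\<bar>)" by (rule wsum_abs_diff_le[OF assms(1)])
    also have "\<dots> \<le> wsum (L n) (\<lambda>k. r / 2)" using N that by (intro wsum_mono[OF assms(1)]) (auto intro: less_imp_le)
    finally show ?thesis using wsum_const[OF assms(1)] by simp
  qed
  then show "\<exists>N. \<forall>n\<ge>N. norm (wsum (L n) x - c) < r" using r by force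
qed

lemma exp_wsum_le: "tail_weights n L \<Longrightarrow> exp (wsum L x) \<le> wsum L (\<lambda>k. exp (x k))"
proof -
  assume L: "tail_weights n L"
  let ?S = "{k. L k \<noteq> 0}"
  have "?S \<noteq> {}" using L unfolding tail_weights_def by (auto simp del: Collect_empty_eq)
  then have "exp (\<Sum>k\<in>?S. L k *\<^sub>R x k) \<le> (\<Sum>k\<in>?S. L k * exp (x k))"
    using L unfolding tail_weights_def by (intro convex_on_sum[OF _ _ exp_convex]) auto
  then show ?thesis unfolding wsum_def by simp
qed

lemma integrable_wsum:
  assumes "\<And>k. integrable M (f k)"
  shows "integrable M (\<lambda>\<omega>. wsum L (\<lambda>k. f k \<omega>))"
    and "(\<integral>\<omega>. wsum L (\<lambda>k. f k \<omega>) \<partial>M) = wsum L (\<lambda>k. integral\<^sup>L M (f k))"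
  unfolding wsum_def using assms by auto

lemma wsum_measurable [measurable]:
  "(\<And>k. f k \<in> borel_measurable M) \<Longrightarrow> (\<lambda>\<omega>. wsum L (\<lambda>k. f k \<omega>)) \<in> borel_measurable M"
  unfolding wsum_def by measurable

lemma strict_mono_common_subseq:
  fixes P :: "'i \<Rightarrow> (nat \<Rightarrow> nat) \<Rightarrow> bool"
  assumes "finite I"
    and refine: "\<And>i (r::nat\<Rightarrow>nat). i \<in> I \<Longrightarrow> strict_mono r \<Longrightarrow> \<exists>r'. strict_mono r' \<and> P i (r \<circ> r')"
    and stable: "\<And>i (r::nat\<Rightarrow>nat) (r'::nat\<Rightarrow>nat). i \<in> I \<Longrightarrow> P i r \<Longrightarrow> strict_mono r' \<Longrightarrow> P i (r \<circ> r')"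
  shows "\<exists>r::nat\<Rightarrow>nat. strict_mono r \<and> (\<forall>i\<in>I. P i r)"
  using assms(1) refine stable
proof (induction I rule: finite_induct)
  case empty
  have "strict_mono (id :: nat \<Rightarrow> nat)" by (simp add: strict_mono_def)
  then show ?case by blast
next
  case (insert x F)
  from insert.IH insert.prems obtain r where r: "strict_mono r" "\<forall>i\<in>F. P i r" by blast
  from insert.prems(1)[of x r] r(1) obtain r' where r': "strict_mono r'" "P x (r \<circ> r')" by blast
  have "\<forall>i\<in>F. P i (r \<circ> r')" using insert.prems(2) r r'(1) by blast
  moreover have "strict_mono (r \<circ> r')" using r'(1) r(1) by (rule_tac strict_mono_o) auto
  ultimately show ?case using r'(2) by blast
qed

lemma liminf_less_imp_subseq:
  fixes x :: "nat \<Rightarrow> 'a::{complete_linorder, linorder_topology}"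
  assumes "liminf x < c"
  obtains \<phi> :: "nat \<Rightarrow> nat" where "strict_mono \<phi>" "\<And>j. x (\<phi> j) < c"
proof -
  obtain r where r: "strict_mono r" "(x \<circ> r) \<longlonglongrightarrow> liminf x" using liminf_subseq_lim by blast
  have "eventually (\<lambda>j. (x \<circ> r) j < c) sequentially" using order_tendstoD(2)[OF r(2) assms] .
  then obtain N where N: "\<And>j. N \<le> j \<Longrightarrow> x (r j) < c" by (auto simp: eventually_sequentially)
  show ?thesis using r(1) N by (intro that[of "\<lambda>j. r (j + N)"]) (auto simp: strict_mono_def)
qed

lemma integral_tendsto_of_L1:
  fixes f :: "nat \<Rightarrow> 'a \<Rightarrow> real"
  assumes "\<And>k. integrable M (f k)" "integrable M h" "(\<lambda>k. \<integral>\<omega>. \<bar>f k \<omega> - h \<omega>\<bar> \<partial>M) \<longlonglongrightarrow> 0"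
  shows "(\<lambda>k. \<integral>\<omega>. f k \<omega> \<partial>M) \<longlonglongrightarrow> (\<integral>\<omega>. h \<omega> \<partial>M)"
proof (rule LIM_zero_cancel, rule Lim_null_comparison[OF _ assms(3)])
  have "\<bar>(\<integral>\<omega>. f k \<omega> \<partial>M) - (\<integral>\<omega>. h \<omega> \<partial>M)\<bar> \<le> (\<integral>\<omega>. \<bar>f k \<omega> - h \<omega>\<bar> \<partial>M)" for k
    using integral_abs_bound[of M "\<lambda>\<omega>. f k \<omega> - h \<omega>"] assms(1,2) by simp
  then show "\<forall>\<^sub>F k in sequentially. norm ((\<integral>\<omega>. f k \<omega> \<partial>M) - (\<integral>\<omega>. h \<omega> \<partial>M)) \<le> (\<integral>\<omega>. \<bar>f k \<omega> - h \<omega>\<bar> \<partial>M)"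
    by simp
qed

lemma bounded_integrals_of_L1_tendsto:
  fixes f :: "nat \<Rightarrow> 'j \<Rightarrow> 'a \<Rightarrow> real"
  assumes A: "finite A" and f: "\<And>k a. a \<in> A \<Longrightarrow> integrable M (f k a)"
    and h: "\<And>a. a \<in> A \<Longrightarrow> integrable M (h a)"
    and L1: "\<And>a. a \<in> A \<Longrightarrow> (\<lambda>k. \<integral>\<omega>. \<bar>f k a \<omega> - h a \<omega>\<bar> \<partial>M) \<longlonglongrightarrow> 0"
  obtains B where "\<And>k a. a \<in> A \<Longrightarrow> \<bar>\<integral>\<omega>. f k a \<omega> \<partial>M\<bar> \<le> B"
proof -
  have "\<forall>a\<in>A. \<exists>B. \<forall>k. \<bar>\<integral>\<omega>. f k a \<omega> \<partial>M\<bar> \<le> B"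
  proof
    fix a assume a: "a \<in> A"
    have "convergent (\<lambda>k. \<integral>\<omega>. f k a \<omega> \<partial>M)"
      using integral_tendsto_of_L1[where f = "\<lambda>k. f k a" and h = "h a", OF f[OF a] h[OF a] L1[OF a]]
      by (rule convergentI)
    then obtain K where "\<forall>k. norm (\<integral>\<omega>. f k a \<omega> \<partial>M) \<le> K"
      using BseqE[OF convergent_imp_Bseq] by metis
    then show "\<exists>B. \<forall>k. \<bar>\<integral>\<omega>. f k a \<omega> \<partial>M\<bar> \<le> B" by auto
  qed
  from bchoice[OF this] obtain Ba where Ba: "\<forall>a\<in>A. \<forall>k. \<bar>\<integral>\<omega>. f k a \<omega> \<partial>M\<bar> \<le> Ba a" by blast
  show ?thesis
  proof (rule that)
    fix k a assume a: "a \<in> A"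
    have "\<bar>Ba a\<bar> \<le> (\<Sum>a\<in>A. \<bar>Ba a\<bar>)" using A a by (intro member_le_sum) auto
    moreover have "\<bar>\<integral>\<omega>. f k a \<omega> \<partial>M\<bar> \<le> Ba a" using Ba a by blast
    ultimately show "\<bar>\<integral>\<omega>. f k a \<omega> \<partial>M\<bar> \<le> (\<Sum>a\<in>A. \<bar>Ba a\<bar>)" by linarith
  qed
qed

lemma exists_subseq_AE_tendsto_convergent:
  fixes f :: "nat \<Rightarrow> 'j \<Rightarrow> 'a \<Rightarrow> real" and x :: "nat \<Rightarrow> 'i \<Rightarrow> real"
  assumes A: "finite A" and B: "finite B"
    and f: "\<And>k a. a \<in> A \<Longrightarrow> integrable M (f k a)" and h: "\<And>a. a \<in> A \<Longrightarrow> integrable M (h a)"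
    and L1: "\<And>a. a \<in> A \<Longrightarrow> (\<lambda>k. \<integral>\<omega>. \<bar>f k a \<omega> - h a \<omega>\<bar> \<partial>M) \<longlonglongrightarrow> 0"
    and bounded: "\<And>b. b \<in> B \<Longrightarrow> bounded (range (\<lambda>k. x k b))"
  shows "\<exists>r::nat\<Rightarrow>nat. strict_mono r \<and> (\<forall>a\<in>A. AE \<omega> in M. (\<lambda>k. f (r k) a \<omega>) \<longlonglongrightarrow> h a \<omega>) \<and>
           (\<forall>b\<in>B. convergent (\<lambda>k. x (r k) b))"
proof -
  define P where "P c r \<longleftrightarrow> (case c of Inl a \<Rightarrow> AE \<omega> in M. (\<lambda>k. f (r k) a \<omega>) \<longlonglongrightarrow> h a \<omega>
                                    | Inr b \<Rightarrow> convergent (\<lambda>k. x (r k) b))" for c and r :: "nat \<Rightarrow> nat"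
  have "\<exists>r::nat\<Rightarrow>nat. strict_mono r \<and> (\<forall>c\<in>Inl ` A \<union> Inr ` B. P c r)"
  proof (rule strict_mono_common_subseq)
    show "finite (Inl ` A \<union> Inr ` B)" using A B by simp
  next
    fix c and r :: "nat \<Rightarrow> nat" assume c: "c \<in> Inl ` A \<union> Inr ` B" and r: "strict_mono r"
    show "\<exists>r'. strict_mono r' \<and> P c (r \<circ> r')"
    proof (cases c)
      case (Inl a)
      then have a: "a \<in> A" using c by auto
      have "(\<lambda>n. \<integral>\<omega>. norm (f (r n) a \<omega> - h a \<omega>) \<partial>M) \<longlonglongrightarrow> 0"
        using LIMSEQ_subseq_LIMSEQ[OF L1[OF a] r] by (simp add: o_def)
      then obtain r' where "strict_mono r'" "AE \<omega> in M. (\<lambda>n. f (r (r' n)) a \<omega> - h a \<omega>) \<longlonglongrightarrow> 0"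
        using tendsto_L1_AE_subseq[of M "\<lambda>n \<omega>. f (r n) a \<omega> - h a \<omega>"] f[OF a] h[OF a] by auto
      then show ?thesis unfolding P_def Inl
        by (auto elim!: eventually_mono intro: LIM_zero_cancel)
    next
      case (Inr b)
      then have "bounded (range (\<lambda>k. x (r k) b))" using c bounded by (auto intro: bounded_subset)
      then obtain r' \<xi> where "strict_mono r'" "((\<lambda>k. x (r k) b) \<circ> r') \<longlonglongrightarrow> \<xi>"
        using bounded_imp_convergent_subsequence by blast
      then show ?thesis unfolding P_def Inr by (auto simp: convergent_def o_def)
    qed
  next
    fix c and r r' :: "nat \<Rightarrow> nat" assume "P c r" "strict_mono r'"
    then show "P c (r \<circ> r')" unfolding P_def
      by (cases c) (auto elim!: eventually_mono dest: LIMSEQ_subseq_LIMSEQ convergent_subseq_convergent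
          simp: o_def)
  qed
  then obtain r :: "nat \<Rightarrow> nat" where r: "strict_mono r" "\<forall>c\<in>Inl ` A \<union> Inr ` B. P c r" by blast
  have "P (Inl a) r" if "a \<in> A" for a using r(2) that by blast
  moreover have "P (Inr b) r" if "b \<in> B" for b using r(2) that by blast
  ultimately show ?thesis using r(1) unfolding P_def by auto
qed

section \<open>A Komlos-type lemma\<close>

lemma exp_half_diff_sq:
  fixes a b :: real
  shows "(exp (- a / 2) - exp (- b / 2))\<^sup>2 = exp (- a) + exp (- b) - 2 * exp (- ((a + b) / 2))"
proof -
  have "exp (- a / 2) ^ 2 = exp (- a)" "exp (- b / 2) ^ 2 = exp (- b)"
    by (simp_all add: power2_eq_square exp_add[symmetric])
  moreover have "exp (- a / 2) * exp (- b / 2) = exp (- ((a + b) / 2))" by (simp add: exp_add[symmetric] field_simps)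
  ultimately show ?thesis by (simp add: power2_diff)
qed

lemma abs_le_add_sq_divide: "0 < d \<Longrightarrow> \<bar>x\<bar> \<le> d + x\<^sup>2 / (d::real)"
proof (cases "\<bar>x\<bar> \<le> d")
  case False
  assume d: "0 < d"
  then have "\<bar>x\<bar> * d \<le> \<bar>x\<bar> * \<bar>x\<bar>" using False by (intro mult_left_mono) auto
  then show ?thesis using d by (simp add: field_simps power2_eq_square add_increasing)
qed (simp add: add_increasing2)

lemma (in prob_space) integral_abs_le_sq:
  fixes f :: "'a \<Rightarrow> real"
  assumes "integrable M f" "integrable M (\<lambda>\<omega>. (f \<omega>)\<^sup>2)" "0 < d"
  shows "(\<integral>\<omega>. \<bar>f \<omega>\<bar> \<partial>M) \<le> d + (\<integral>\<omega>. (f \<omega>)\<^sup>2 \<partial>M) / d"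
proof -
  have "(\<integral>\<omega>. \<bar>f \<omega>\<bar> \<partial>M) \<le> (\<integral>\<omega>. d + (f \<omega>)\<^sup>2 / d \<partial>M)"
    using assms(1,2) abs_le_add_sq_divide[OF assms(3)] by (intro integral_mono) auto
  also have "\<dots> = d + (\<integral>\<omega>. (f \<omega>)\<^sup>2 \<partial>M) / d" using assms(2) by (simp add: prob_space)
  finally show ?thesis .
qed

lemma (in finite_measure) integrable_exp_neg:
  fixes f :: "'a \<Rightarrow> real"
  assumes [measurable]: "f \<in> borel_measurable M" and "\<And>\<omega>. 0 \<le> f \<omega>"
  shows "integrable M (\<lambda>\<omega>. exp (- f \<omega>))"
proof (rule integrable_const_bound[where B=1])
  show "AE \<omega> in M. norm (exp (- f \<omega>)) \<le> 1" by (intro AE_I2) (simp add: assms(2))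
qed measurable

definition exp_potential :: "'a measure \<Rightarrow> 'i set \<Rightarrow> (nat \<Rightarrow> 'i \<Rightarrow> 'a \<Rightarrow> real) \<Rightarrow> (nat \<Rightarrow> real) \<Rightarrow> real"
  where "exp_potential M I u L = (\<Sum>i\<in>I. \<integral>\<omega>. exp (- wsum L (\<lambda>k. u k i \<omega>)) \<partial>M)"

context prob_space
begin

lemma exp_potential_bounds:
  assumes "finite I" "\<And>k i. i \<in> I \<Longrightarrow> u k i \<in> borel_measurable M" "\<And>k i \<omega>. 0 \<le> u k i \<omega>"
    and "tail_weights n L"
  shows "0 \<le> exp_potential M I u L" "exp_potential M I u L \<le> card I"
proof -
  show "0 \<le> exp_potential M I u L" unfolding exp_potential_def by (intro sum_nonneg integral_nonneg_AE) auto
  have "(\<integral>\<omega>. exp (- wsum L (\<lambda>k. u k i \<omega>)) \<partial>M) \<le> 1" if "i \<in> I" for i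
  proof -
    have "(\<integral>\<omega>. exp (- wsum L (\<lambda>k. u k i \<omega>)) \<partial>M) \<le> (\<integral>\<omega>. 1 \<partial>M)"
      using assms that wsum_nonneg[OF assms(4)]
      by (intro integral_mono integrable_exp_neg) (auto simp: measurable_compose)
    then show ?thesis by (simp add: prob_space)
  qed
  then have "exp_potential M I u L \<le> (\<Sum>i\<in>I. 1)" unfolding exp_potential_def by (rule sum_mono)
  then show "exp_potential M I u L \<le> card I" by simp
qed

lemma exp_potential_parallelogram:
  assumes fI: "finite I" and um[measurable]: "\<And>k i. i \<in> I \<Longrightarrow> u k i \<in> borel_measurable M"
    and un: "\<And>k i \<omega>. 0 \<le> u k i \<omega>"
    and L: "tail_weights n L" "tail_weights n L'" and i: "i \<in> I"
  shows "(\<integral>\<omega>. (exp (- wsum L (\<lambda>k. u k i \<omega>) / 2) - exp (- wsum L' (\<lambda>k. u k i \<omega>) / 2))\<^sup>2 \<partial>M)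
    \<le> exp_potential M I u L + exp_potential M I u L' - 2 * exp_potential M I u (\<lambda>k. (L k + L' k) / 2)"
proof -
  define V where "V L j \<omega> = wsum L (\<lambda>k. u k j \<omega>)" for L j \<omega>
  define Mid where "Mid = (\<lambda>k. (L k + L' k) / 2)"
  have Mid: "tail_weights n Mid" "V Mid j \<omega> = (V L j \<omega> + V L' j \<omega>) / 2" for j \<omega>
    unfolding Mid_def V_def using tail_weights_midpoint[OF L] by auto
  have int: "integrable M (\<lambda>\<omega>. exp (- V L j \<omega>))" if "tail_weights n L" "j \<in> I" for L j
    unfolding V_def using that un wsum_nonneg by (intro integrable_exp_neg) auto
  have "(\<integral>\<omega>. (exp (- V L j \<omega> / 2) - exp (- V L' j \<omega> / 2))\<^sup>2 \<partial>M) =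
      (\<integral>\<omega>. exp (- V L j \<omega>) \<partial>M) + (\<integral>\<omega>. exp (- V L' j \<omega>) \<partial>M) - 2 * (\<integral>\<omega>. exp (- V Mid j \<omega>) \<partial>M)"
    if j: "j \<in> I" for j
    unfolding exp_half_diff_sq Mid(2)[symmetric] using int[OF L(1) j] int[OF L(2) j] int[OF Mid(1) j]
    by (simp add: Bochner_Integration.integral_diff Bochner_Integration.integral_add)
  then have sum_eq: "(\<Sum>j\<in>I. \<integral>\<omega>. (exp (- V L j \<omega> / 2) - exp (- V L' j \<omega> / 2))\<^sup>2 \<partial>M) =
      exp_potential M I u L + exp_potential M I u L' - 2 * exp_potential M I u Mid"
    unfolding exp_potential_def V_def by (simp add: sum.distrib sum_subtractf sum_distrib_left)
  have "(\<integral>\<omega>. (exp (- V L i \<omega> / 2) - exp (- V L' i \<omega> / 2))\<^sup>2 \<partial>M)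
      \<le> (\<Sum>j\<in>I. \<integral>\<omega>. (exp (- V L j \<omega> / 2) - exp (- V L' j \<omega> / 2))\<^sup>2 \<partial>M)"
    by (rule member_le_sum[OF i _ fI]) (auto intro!: integral_nonneg_AE)
  then show ?thesis unfolding sum_eq unfolding V_def Mid_def .
qed

end

lemma (in prob_space) exists_near_minimal_tail_weights:
  assumes fI: "finite I" and um: "\<And>k i. i \<in> I \<Longrightarrow> u k i \<in> borel_measurable M"
    and un: "\<And>k i \<omega>. 0 \<le> u k i \<omega>"
  obtains Ls d D where "\<And>n. tail_weights n (Ls n)"
    and "\<And>n. exp_potential M I u (Ls n) < d n + 1 / real (Suc n)"
    and "\<And>n L. tail_weights n L \<Longrightarrow> d n \<le> exp_potential M I u L"
    and "d \<longlonglongrightarrow> D" and "\<And>n. d n \<le> D"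
proof -
  let ?Psi = "exp_potential M I u"
  have Psi_bounds: "0 \<le> ?Psi L" "?Psi L \<le> card I" if "tail_weights n L" for n L
    using exp_potential_bounds[of I u n L] fI um un that by blast+
  define dd where "dd n = Inf (?Psi ` {L. tail_weights n L})" for n
  have ne: "?Psi ` {L. tail_weights n L} \<noteq> {}" for n using tail_weights_point[of n] by auto
  have bb: "bdd_below (?Psi ` {L. tail_weights n L})" for n
    unfolding bdd_below_def using Psi_bounds(1) by blast
  have dd_le: "dd n \<le> ?Psi L" if "tail_weights n L" for n L
    unfolding dd_def by (rule cInf_lower) (use that bb in auto)
  have "dd n \<le> dd (Suc n)" for n
    unfolding dd_def using tail_weights_mono[of "Suc n" _ n] by (intro cInf_superset_mono[OF ne bb]) auto
  then have inc: "incseq dd" by (simp add: incseq_SucI)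
  have bda: "bdd_above (range dd)"
  proof (rule bdd_aboveI2)
    show "dd n \<le> card I" for n
      using dd_le[OF tail_weights_point] Psi_bounds(2)[OF tail_weights_point] by (rule order_trans)
  qed
  define Dl where "Dl = (SUP n. dd n)"
  have ddlim: "dd \<longlonglongrightarrow> Dl" unfolding Dl_def by (rule LIMSEQ_incseq_SUP[OF bda inc])
  have ddDl: "dd n \<le> Dl" for n unfolding Dl_def by (rule cSUP_upper[OF UNIV_I bda])
  have "\<exists>L. tail_weights n L \<and> ?Psi L < dd n + 1 / real (Suc n)" for n
    using cInf_lessD[OF ne, where z = "dd n + 1 / real (Suc n)"] unfolding dd_def by auto
  then obtain Ls where Ls: "\<And>n. tail_weights n (Ls n)" "\<And>n. ?Psi (Ls n) < dd n + 1 / real (Suc n)"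
    by metis
  then show ?thesis using that dd_le ddlim ddDl by blast
qed

(* The Delbaen-Schachermayer trick: by exp_half_diff_sq, the L2 distance of exp (-V/2) and exp (-V'/2)
   is controlled by the excess of exp_potential at V, V' over its value at their midpoint, and this
   excess is small for near minimisers over ever smaller tails. *)

lemma (in prob_space) exists_tail_weights_exp_half_L1_Cauchy:
  assumes fI: "finite I" and um[measurable]: "\<And>k i. i \<in> I \<Longrightarrow> u k i \<in> borel_measurable M"
    and un: "\<And>k i \<omega>. 0 \<le> u k i \<omega>"
  shows "\<exists>L. (\<forall>n. tail_weights n (L n)) \<and> (\<forall>i\<in>I. \<forall>e>0. \<exists>N. \<forall>p\<ge>N. \<forall>q\<ge>N.
     (\<integral>\<omega>. \<bar>exp (- wsum (L p) (\<lambda>k. u k i \<omega>) / 2) - exp (- wsum (L q) (\<lambda>k. u k i \<omega>) / 2)\<bar> \<partial>M) < e)"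
proof -
  let ?Psi = "exp_potential M I u"
  obtain Ls dd Dl where Ls: "\<And>n. tail_weights n (Ls n)" "\<And>n. ?Psi (Ls n) < dd n + 1 / real (Suc n)"
    and dd_le: "\<And>n L. tail_weights n L \<Longrightarrow> dd n \<le> ?Psi L"
    and ddlim: "dd \<longlonglongrightarrow> Dl" and ddDl: "\<And>n. dd n \<le> Dl"
    using exists_near_minimal_tail_weights[of I u] fI um un by blast
  define W where "W p i \<omega> = exp (- wsum (Ls p) (\<lambda>k. u k i \<omega>) / 2)" for p i \<omega>
  have W_bound: "\<bar>W p i \<omega> - W q i \<omega>\<bar> \<le> 1" for p q i \<omega>
  proof -
    have "0 \<le> wsum (Ls p) (\<lambda>k. u k i \<omega>)" "0 \<le> wsum (Ls q) (\<lambda>k. u k i \<omega>)"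
      using wsum_nonneg[OF Ls(1)] un by auto
    then have "exp (- wsum (Ls p) (\<lambda>k. u k i \<omega>) / 2) \<le> 1" "exp (- wsum (Ls q) (\<lambda>k. u k i \<omega>) / 2) \<le> 1"
      by auto
    moreover have "0 < exp (- wsum (Ls p) (\<lambda>k. u k i \<omega>) / 2)" "0 < exp (- wsum (Ls q) (\<lambda>k. u k i \<omega>) / 2)"
      by auto
    ultimately show ?thesis unfolding W_def by linarith
  qed
  have W_int: "integrable M (\<lambda>\<omega>. W p i \<omega> - W q i \<omega>)" "integrable M (\<lambda>\<omega>. (W p i \<omega> - W q i \<omega>)\<^sup>2)"
    if "i \<in> I" for p q i
  proof -
    have [measurable]: "(\<lambda>\<omega>. W p i \<omega> - W q i \<omega>) \<in> borel_measurable M" unfolding W_def using that by measurable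
    show "integrable M (\<lambda>\<omega>. W p i \<omega> - W q i \<omega>)"
      by (rule integrable_const_bound[where B=1]) (use W_bound in auto)
    show "integrable M (\<lambda>\<omega>. (W p i \<omega> - W q i \<omega>)\<^sup>2)"
      by (rule integrable_const_bound[where B=1]) (use W_bound in \<open>auto simp: abs_square_le_1\<close>)
  qed
  have sq_bound: "(\<integral>\<omega>. (W p i \<omega> - W q i \<omega>)\<^sup>2 \<partial>M) \<le> 2 * (Dl - dd n) + 2 / real (Suc n)"
    if "n \<le> p" "n \<le> q" "i \<in> I" for n p q i
  proof -
    have L: "tail_weights n (Ls p)" "tail_weights n (Ls q)" using Ls(1) that tail_weights_mono by auto
    have "(\<integral>\<omega>. (W p i \<omega> - W q i \<omega>)\<^sup>2 \<partial>M)
        \<le> ?Psi (Ls p) + ?Psi (Ls q) - 2 * ?Psi (\<lambda>k. (Ls p k + Ls q k) / 2)"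
      unfolding W_def by (rule exp_potential_parallelogram) (use fI um un L that(3) in auto)
    then have "(\<integral>\<omega>. (W p i \<omega> - W q i \<omega>)\<^sup>2 \<partial>M) \<le> ?Psi (Ls p) + ?Psi (Ls q) - 2 * dd n"
      using dd_le[OF tail_weights_midpoint(1)[OF L]] by linarith
    moreover have "1 / real (Suc p) \<le> 1 / real (Suc n)" "1 / real (Suc q) \<le> 1 / real (Suc n)"
      using that by (auto simp: divide_simps)
    moreover have "2 / real (Suc n) = 2 * (1 / real (Suc n))" by simp
    ultimately show ?thesis using Ls(2)[of p] Ls(2)[of q] ddDl[of p] ddDl[of q] by (smt (verit))
  qed
  have "\<exists>N. \<forall>p\<ge>N. \<forall>q\<ge>N. (\<integral>\<omega>. \<bar>W p i \<omega> - W q i \<omega>\<bar> \<partial>M) < e" if i: "i \<in> I" and e: "0 < e" for i e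
  proof -
    define t where "t = e\<^sup>2 / 16"
    have t: "0 < t" using e unfolding t_def by simp
    have "eventually (\<lambda>n. Dl - t < dd n) sequentially" using order_tendstoD(1)[OF ddlim] t by simp
    moreover have "eventually (\<lambda>n. 1 / real (Suc n) < t) sequentially"
      using order_tendstoD(2)[OF LIMSEQ_inverse_real_of_nat t] by (simp add: inverse_eq_divide)
    ultimately obtain n where n: "Dl - dd n < t" "1 / real (Suc n) < t"
      unfolding eventually_sequentially by (metis diff_less_eq add.commute le_add1 add_leD1)
    have "(\<integral>\<omega>. \<bar>W p i \<omega> - W q i \<omega>\<bar> \<partial>M) < e" if "n \<le> p" "n \<le> q" for p q
    proof -
      have "(\<integral>\<omega>. \<bar>W p i \<omega> - W q i \<omega>\<bar> \<partial>M) \<le> e / 2 + (\<integral>\<omega>. (W p i \<omega> - W q i \<omega>)\<^sup>2 \<partial>M) / (e / 2)"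
        using integral_abs_le_sq[OF W_int[OF i], of "e / 2"] e by simp
      also have "\<dots> \<le> e / 2 + (2 * (Dl - dd n) + 2 / real (Suc n)) / (e / 2)"
        using sq_bound[OF that i] e by (intro add_left_mono divide_right_mono) auto
      also have "\<dots> < e / 2 + (4 * t) / (e / 2)"
        using n e by (intro add_strict_left_mono divide_strict_right_mono) auto
      also have "\<dots> = e" using e unfolding t_def by (simp add: power2_eq_square field_simps)
      finally show ?thesis .
    qed
    then show ?thesis by blast
  qed
  then show ?thesis using Ls(1) unfolding W_def by blast
qed

lemma convergent_of_Cauchy_exp_neg:
  fixes U :: "nat \<Rightarrow> real"
  assumes U0: "\<And>n. 0 \<le> U n" and Cauchy: "Cauchy (\<lambda>n. exp (- U n / 2))"
    and finite: "liminf (\<lambda>n. ennreal (U n)) < top"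
  shows "convergent U"
proof -
  obtain w where w: "(\<lambda>n. exp (- U n / 2)) \<longlonglongrightarrow> w"
    using Cauchy by (auto simp: Cauchy_convergent_iff convergent_def)
  have "w \<noteq> 0"
  proof
    assume w0: "w = 0"
    from finite obtain r where r: "0 \<le> r" "liminf (\<lambda>n. ennreal (U n)) = ennreal r"
      by (auto simp: less_top_ennreal)
    have "ennreal (r + 1) \<le> liminf (\<lambda>n. ennreal (U n))"
    proof (subst le_Liminf_iff, intro allI impI)
      fix y assume y: "y < ennreal (r + 1)"
      have "eventually (\<lambda>n. exp (- U n / 2) < exp (- (r + 1) / 2)) sequentially"
        using order_tendstoD(2)[OF w, of "exp (- (r + 1) / 2)"] w0 by simp
      then show "eventually (\<lambda>n. y < ennreal (U n)) sequentially"
      proof (rule eventually_mono)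
        fix n assume "exp (- U n / 2) < exp (- (r + 1) / 2)"
        then have "ennreal (r + 1) \<le> ennreal (U n)" by (intro ennreal_leI) simp
        then show "y < ennreal (U n)" using y by simp
      qed
    qed
    then show False using r by (simp add: ennreal_le_iff)
  qed
  moreover have "0 \<le> w" by (rule LIMSEQ_le_const[OF w]) (auto intro: less_imp_le)
  ultimately have "(\<lambda>n. - 2 * ln (exp (- U n / 2))) \<longlonglongrightarrow> - 2 * ln w"
    by (intro tendsto_mult tendsto_const tendsto_ln[OF w]) simp
  then show ?thesis by (auto simp: convergent_def)
qed

lemma integrable_tendsto_Fatou:
  fixes f :: "nat \<Rightarrow> 'a \<Rightarrow> real"
  assumes fi: "\<And>n. integrable M (f n)" and f0: "\<And>n \<omega>. 0 \<le> f n \<omega>"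
    and lim: "AE \<omega> in M. (\<lambda>n. f n \<omega>) \<longlonglongrightarrow> h \<omega>" and h[measurable]: "h \<in> borel_measurable M"
    and int_lim: "(\<lambda>n. \<integral>\<omega>. f n \<omega> \<partial>M) \<longlonglongrightarrow> a"
  shows "integrable M h" "(\<integral>\<omega>. h \<omega> \<partial>M) \<le> a"
proof -
  have h0: "AE \<omega> in M. 0 \<le> h \<omega>" using lim by eventually_elim (rule LIMSEQ_le_const, auto simp: f0)
  have "(\<integral>\<^sup>+\<omega>. ennreal (h \<omega>) \<partial>M) = (\<integral>\<^sup>+\<omega>. liminf (\<lambda>n. ennreal (f n \<omega>)) \<partial>M)"
    using lim by (intro nn_integral_cong_AE) (auto elim!: eventually_mono intro!: lim_imp_Liminf[symmetric])
  also have "\<dots> \<le> liminf (\<lambda>n. \<integral>\<^sup>+\<omega>. ennreal (f n \<omega>) \<partial>M)"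
    using fi by (intro nn_integral_liminf) auto
  also have "(\<lambda>n. \<integral>\<^sup>+\<omega>. ennreal (f n \<omega>) \<partial>M) = (\<lambda>n. ennreal (\<integral>\<omega>. f n \<omega> \<partial>M))"
    using fi f0 by (intro ext nn_integral_eq_integral) auto
  also have "liminf \<dots> = ennreal a" using int_lim by (intro lim_imp_Liminf) auto
  finally have nn: "(\<integral>\<^sup>+\<omega>. ennreal (h \<omega>) \<partial>M) \<le> ennreal a" .
  show hi: "integrable M h" using h0 nn by (intro integrableI_nonneg) (auto simp: le_less_trans)
  have "ennreal (\<integral>\<omega>. h \<omega> \<partial>M) \<le> ennreal a" using nn nn_integral_eq_integral[OF hi h0] by simp
  moreover have "0 \<le> a" using int_lim by (rule LIMSEQ_le_const) (auto intro!: integral_nonneg_AE simp: f0)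
  ultimately show "(\<integral>\<omega>. h \<omega> \<partial>M) \<le> a" by (simp add: ennreal_le_iff)
qed

lemma (in prob_space) komlos_tail_wsum:
  assumes fI: "finite I" and um[measurable]: "\<And>k i. i \<in> I \<Longrightarrow> u k i \<in> borel_measurable M"
    and un: "\<And>k i \<omega>. 0 \<le> u k i \<omega>" and ui: "\<And>k i. i \<in> I \<Longrightarrow> integrable M (u k i)"
    and bounded: "\<And>i. i \<in> I \<Longrightarrow> \<exists>B. \<forall>k. (\<integral>\<omega>. u k i \<omega> \<partial>M) \<le> B"
  shows "\<exists>L. (\<forall>n. tail_weights n (L n)) \<and> (\<forall>i\<in>I. AE \<omega> in M. convergent (\<lambda>n. wsum (L n) (\<lambda>k. u k i \<omega>)))"
proof -
  obtain L where L: "\<And>n. tail_weights n (L n)" and L_Cauchy: "\<forall>i\<in>I. \<forall>e>0. \<exists>N. \<forall>p\<ge>N. \<forall>q\<ge>N.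
     (\<integral>\<omega>. \<bar>exp (- wsum (L p) (\<lambda>k. u k i \<omega>) / 2) - exp (- wsum (L q) (\<lambda>k. u k i \<omega>) / 2)\<bar> \<partial>M) < e"
    using exists_tail_weights_exp_half_L1_Cauchy[of I u] fI um un by blast
  define P where "P i r \<longleftrightarrow> (AE \<omega> in M. Cauchy (\<lambda>n. exp (- wsum (L (r n)) (\<lambda>k. u k i \<omega>) / 2)))"
    for i and r :: "nat \<Rightarrow> nat"
  have "\<exists>r::nat\<Rightarrow>nat. strict_mono r \<and> (\<forall>i\<in>I. P i r)"
  proof (rule strict_mono_common_subseq[OF fI])
    fix i and r :: "nat \<Rightarrow> nat" assume i: "i \<in> I" and r: "strict_mono r"
    define s where "s n \<omega> = exp (- wsum (L (r n)) (\<lambda>k. u k i \<omega>) / 2)" for n \<omega>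
    have "integrable M (s n)" for n
      unfolding s_def using i un wsum_nonneg[OF L] by (intro integrable_const_bound[where B=1]) auto
    moreover have "\<exists>N. \<forall>p\<ge>N. \<forall>q\<ge>N. (LINT \<omega>|M. norm (s p \<omega> - s q \<omega>)) < e" if "e > 0" for e
    proof -
      from L_Cauchy i that obtain N where N: "\<forall>p\<ge>N. \<forall>q\<ge>N.
          (\<integral>\<omega>. \<bar>exp (- wsum (L p) (\<lambda>k. u k i \<omega>) / 2) - exp (- wsum (L q) (\<lambda>k. u k i \<omega>) / 2)\<bar> \<partial>M) < e"
        by blast
      have "N \<le> r p" if "N \<le> p" for p using seq_suble[OF r, of p] that by linarith
      then have "\<forall>p\<ge>N. \<forall>q\<ge>N. (LINT \<omega>|M. norm (s p \<omega> - s q \<omega>)) < e" using N unfolding s_def by simp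
      then show ?thesis by blast
    qed
    ultimately obtain r' where "strict_mono r'" "AE \<omega> in M. Cauchy (\<lambda>n. s (r' n) \<omega>)"
      by (rule cauchy_L1_AE_cauchy_subseq)
    then show "\<exists>r'. strict_mono r' \<and> P i (r \<circ> r')" unfolding P_def s_def by auto
  next
    fix i and r r' :: "nat \<Rightarrow> nat" assume "P i r" "strict_mono r'"
    then show "P i (r \<circ> r')"
      unfolding P_def by (auto elim!: eventually_mono dest: Cauchy_subseq_Cauchy simp: o_def)
  qed
  then obtain r :: "nat \<Rightarrow> nat" where r: "strict_mono r" "\<forall>i\<in>I. P i r" by blast
  define L' where "L' n = L (r n)" for n
  have L': "tail_weights n (L' n)" for n unfolding L'_def using L r(1) by (rule tail_weights_subseq)
  have "AE \<omega> in M. convergent (\<lambda>n. wsum (L' n) (\<lambda>k. u k i \<omega>))" if i: "i \<in> I" for i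
  proof -
    obtain B where B: "\<And>k. (\<integral>\<omega>. u k i \<omega> \<partial>M) \<le> B" using bounded[OF i] by blast
    define U where "U n \<omega> = wsum (L' n) (\<lambda>k. u k i \<omega>)" for n \<omega>
    have U0: "0 \<le> U n \<omega>" for n \<omega> unfolding U_def using wsum_nonneg[OF L'] un by auto
    have Ui: "integrable M (U n)" for n unfolding U_def using integrable_wsum(1) ui[OF i] .
    have "(\<integral>\<omega>. U n \<omega> \<partial>M) \<le> B" for n
    proof -
      have "(\<integral>\<omega>. U n \<omega> \<partial>M) = wsum (L' n) (\<lambda>k. \<integral>\<omega>. u k i \<omega> \<partial>M)"
        unfolding U_def using integrable_wsum(2) ui[OF i] .
      also have "\<dots> \<le> wsum (L' n) (\<lambda>k. B)" using B by (intro wsum_mono[OF L'])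
      finally show ?thesis using wsum_const[OF L'] by simp
    qed
    have Um[measurable]: "U n \<in> borel_measurable M" for n using Ui by auto
    have "(\<integral>\<^sup>+\<omega>. liminf (\<lambda>n. ennreal (U n \<omega>)) \<partial>M) \<le> liminf (\<lambda>n. \<integral>\<^sup>+\<omega>. ennreal (U n \<omega>) \<partial>M)"
      by (rule nn_integral_liminf) simp
    also have "\<dots> = liminf (\<lambda>n. ennreal (\<integral>\<omega>. U n \<omega> \<partial>M))"
      using Ui U0 by (simp add: nn_integral_eq_integral)
    also have "\<dots> \<le> liminf (\<lambda>n. ennreal B)"
      using \<open>\<And>n. (\<integral>\<omega>. U n \<omega> \<partial>M) \<le> B\<close> by (intro Liminf_mono always_eventually allI ennreal_leI)
    also have "\<dots> < \<infinity>" by (simp add: Liminf_const)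
    finally have "AE \<omega> in M. liminf (\<lambda>n. ennreal (U n \<omega>)) < \<infinity>"
      by (intro finite_nn_integral_imp_ae_finite) simp_all
    moreover have "AE \<omega> in M. Cauchy (\<lambda>n. exp (- U n \<omega> / 2))" using r(2) i unfolding P_def U_def L'_def by blast
    ultimately show ?thesis unfolding U_def[symmetric]
      by eventually_elim (rule convergent_of_Cauchy_exp_neg[OF U0], auto)
  qed
  then show ?thesis using L' by blast
qed

lemma (in prob_space) komlos_bounded_above:
  fixes X :: "nat \<Rightarrow> 'i \<Rightarrow> 'a \<Rightarrow> real"
  assumes fI: "finite I" and X: "\<And>k i. i \<in> I \<Longrightarrow> integrable M (X k i)"
    and le: "AE \<omega> in M. \<forall>k. \<forall>i\<in>I. X k i \<omega> \<le> C"
    and means: "\<And>i. i \<in> I \<Longrightarrow> (\<lambda>k. \<integral>\<omega>. X k i \<omega> \<partial>M) \<longlonglongrightarrow> x i"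
  shows "\<exists>L Y. (\<forall>n. tail_weights n (L n)) \<and> (\<forall>i\<in>I. integrable M (Y i) \<and> x i \<le> (\<integral>\<omega>. Y i \<omega> \<partial>M) \<and>
           (AE \<omega> in M. (\<lambda>n. wsum (L n) (\<lambda>k. X k i \<omega>)) \<longlonglongrightarrow> Y i \<omega>))"
proof -
  define u where "u k i \<omega> = max 0 (C - X k i \<omega>)" for k i \<omega>
  have u_eq: "AE \<omega> in M. \<forall>k. \<forall>i\<in>I. u k i \<omega> = C - X k i \<omega>"
    using le by eventually_elim (auto simp: u_def)
  have ui: "integrable M (u k i)" if "i \<in> I" for k i
    unfolding u_def using X[OF that] by (intro integrable_max) auto
  have u_means: "(\<lambda>k. \<integral>\<omega>. u k i \<omega> \<partial>M) \<longlonglongrightarrow> C - x i" if i: "i \<in> I" for i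
  proof -
    have "(\<integral>\<omega>. u k i \<omega> \<partial>M) = (\<integral>\<omega>. C - X k i \<omega> \<partial>M)" for k
      using ui[OF i] X[OF i] u_eq i by (intro integral_cong_AE) (auto elim!: eventually_mono)
    also have "(\<integral>\<omega>. C - X k i \<omega> \<partial>M) = C - (\<integral>\<omega>. X k i \<omega> \<partial>M)" for k
      using X[OF i] by (simp add: prob_space)
    finally show ?thesis using means[OF i] by (simp add: tendsto_diff)
  qed
  have "\<exists>B. \<forall>k. (\<integral>\<omega>. u k i \<omega> \<partial>M) \<le> B" if i: "i \<in> I" for i
  proof -
    obtain B where "\<And>k. norm (\<integral>\<omega>. u k i \<omega> \<partial>M) \<le> B"
      using convergent_imp_Bseq[OF convergentI[OF u_means[OF i]]] by (auto simp: Bseq_def)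
    then have "\<forall>k. (\<integral>\<omega>. u k i \<omega> \<partial>M) \<le> B" by (auto simp: abs_le_iff)
    then show ?thesis ..
  qed
  moreover have "0 \<le> u k i \<omega>" for k i \<omega> unfolding u_def by simp
  ultimately obtain L where L: "\<And>n. tail_weights n (L n)"
    and L_conv: "\<forall>i\<in>I. AE \<omega> in M. convergent (\<lambda>n. wsum (L n) (\<lambda>k. u k i \<omega>))"
    using komlos_tail_wsum[of I u] fI ui by blast
  define V where "V i \<omega> = lim (\<lambda>n. wsum (L n) (\<lambda>k. u k i \<omega>))" for i \<omega>
  have "integrable M (\<lambda>\<omega>. C - V i \<omega>) \<and> x i \<le> (\<integral>\<omega>. C - V i \<omega> \<partial>M) \<and>
      (AE \<omega> in M. (\<lambda>n. wsum (L n) (\<lambda>k. X k i \<omega>)) \<longlonglongrightarrow> C - V i \<omega>)" if i: "i \<in> I" for i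
  proof -
    have um[measurable]: "u k i \<in> borel_measurable M" for k using ui[OF i] by auto
    have V_lim: "AE \<omega> in M. (\<lambda>n. wsum (L n) (\<lambda>k. u k i \<omega>)) \<longlonglongrightarrow> V i \<omega>"
      using L_conv i unfolding V_def by (auto simp: convergent_LIMSEQ_iff)
    have "(\<lambda>n. \<integral>\<omega>. wsum (L n) (\<lambda>k. u k i \<omega>) \<partial>M) \<longlonglongrightarrow> C - x i"
      unfolding integrable_wsum(2)[OF ui[OF i]] by (rule wsum_tendsto[OF L u_means[OF i]])
    moreover have "0 \<le> wsum (L n) (\<lambda>k. u k i \<omega>)" for n \<omega>
      unfolding u_def by (intro wsum_nonneg[OF L]) simp
    moreover have "V i \<in> borel_measurable M" unfolding V_def by measurable
    ultimately have Vi: "integrable M (V i)" and V_int: "(\<integral>\<omega>. V i \<omega> \<partial>M) \<le> C - x i"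
      using integrable_tendsto_Fatou[OF integrable_wsum(1)[OF ui[OF i]] _ V_lim] by blast+
    have "AE \<omega> in M. (\<lambda>n. wsum (L n) (\<lambda>k. X k i \<omega>)) \<longlonglongrightarrow> C - V i \<omega>"
      using u_eq V_lim
    proof eventually_elim
      case (elim \<omega>)
      then have "wsum (L n) (\<lambda>k. X k i \<omega>) = C - wsum (L n) (\<lambda>k. u k i \<omega>)" for n
        using i wsum_const_diff[OF L, where c = C and x = "\<lambda>k. u k i \<omega>"] by simp
      then show ?case using elim(2) by (simp add: tendsto_diff)
    qed
    then show ?thesis using Vi V_int by (simp add: prob_space)
  qed
  then show ?thesis using L by (intro exI[of _ L] exI[of _ "\<lambda>i \<omega>. C - V i \<omega>"]) blast
qed

section \<open>Path independence and the class K\<close>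

definition path_independent :: "(int^'d \<Rightarrow> 'a \<Rightarrow> 'a) \<Rightarrow> (int^'d) set \<Rightarrow> nat
    \<Rightarrow> ('a \<times> (int^'d) list \<Rightarrow> int^'d \<Rightarrow> real) \<Rightarrow> 'a \<Rightarrow> bool" where
  "path_independent T R l F \<omega> \<longleftrightarrow> (\<forall>zs as bs. zs \<in> lists R \<and> length zs = l \<and> as \<in> lists R \<and> bs \<in> lists R \<and>
     endpt T (\<omega>, zs) as = endpt T (\<omega>, zs) bs \<longrightarrow> pathsum T F (\<omega>, zs) as = pathsum T F (\<omega>, zs) bs)"

lemma classK_iff:
  "classK M T R l F \<longleftrightarrow>
     (\<forall>zs z. zs \<in> lists R \<and> length zs = l \<and> z \<in> R \<longrightarrow> integrable M (\<lambda>\<omega>. F (\<omega>, zs) z)) \<and>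
     (\<forall>n as. l \<le> n \<and> as \<in> lists R \<and> length as = n \<longrightarrow>
         (\<integral>\<omega>. pathsum T F (\<omega>, drop (n - l) as) as \<partial>M) = 0) \<and>
     (AE \<omega> in M. path_independent T R l F \<omega>)"
  unfolding classK_def path_independent_def ..

lemma pathsum_wsum:
  "pathsum T (\<lambda>\<eta> z. wsum L (\<lambda>k. F k \<eta> z)) \<eta> as = wsum L (\<lambda>k. pathsum T (F k) \<eta> as)"
  unfolding wsum_def by (rule pathsum_sum)

lemma path_independent_wsum:
  assumes "\<And>k. path_independent T R l (F k) \<omega>"
  shows "path_independent T R l (\<lambda>\<eta> z. wsum L (\<lambda>k. F k \<eta> z)) \<omega>"
  unfolding path_independent_def pathsum_wsum
proof (intro allI impI)
  fix zs as bs assume "zs \<in> lists R \<and> length zs = l \<and> as \<in> lists R \<and> bs \<in> lists R \<and>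
    endpt T (\<omega>, zs) as = endpt T (\<omega>, zs) bs"
  then have "(\<lambda>k. pathsum T (F k) (\<omega>, zs) as) = (\<lambda>k. pathsum T (F k) (\<omega>, zs) bs)"
    using assms unfolding path_independent_def by blast
  then show "wsum L (\<lambda>k. pathsum T (F k) (\<omega>, zs) as) = wsum L (\<lambda>k. pathsum T (F k) (\<omega>, zs) bs)"
    by simp
qed

lemma path_independent_limit:
  assumes "\<And>n. path_independent T R l (F n) \<omega>"
    and "\<And>zs as. zs \<in> lists R \<Longrightarrow> length zs = l \<Longrightarrow> as \<in> lists R \<Longrightarrow>
           (\<lambda>n. pathsum T (F n) (\<omega>, zs) as) \<longlonglongrightarrow> pathsum T H (\<omega>, zs) as"
  shows "path_independent T R l H \<omega>"
  unfolding path_independent_def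
proof (intro allI impI)
  fix zs as bs assume v: "zs \<in> lists R \<and> length zs = l \<and> as \<in> lists R \<and> bs \<in> lists R \<and>
    endpt T (\<omega>, zs) as = endpt T (\<omega>, zs) bs"
  then have "(\<lambda>n. pathsum T (F n) (\<omega>, zs) as) = (\<lambda>n. pathsum T (F n) (\<omega>, zs) bs)"
    using assms(1) unfolding path_independent_def by blast
  then show "pathsum T H (\<omega>, zs) as = pathsum T H (\<omega>, zs) bs"
    using assms(2) v by (metis LIMSEQ_unique)
qed

lemma path_independent_diff_window:
  assumes "path_independent T R l F \<omega>"
    and "\<And>zs as bs. zs \<in> lists R \<Longrightarrow> length zs = l \<Longrightarrow> as \<in> lists R \<Longrightarrow> bs \<in> lists R \<Longrightarrow>
           endpt T (\<omega>, zs) as = endpt T (\<omega>, zs) bs \<Longrightarrow> window_pathsum D zs as = window_pathsum D zs bs"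
  shows "path_independent T R l (\<lambda>\<eta> z. F \<eta> z - D (snd \<eta>) z) \<omega>"
  unfolding path_independent_def pathsum_diff pathsum_window_fun
proof (intro allI impI)
  fix zs as bs assume v: "zs \<in> lists R \<and> length zs = l \<and> as \<in> lists R \<and> bs \<in> lists R \<and>
    endpt T (\<omega>, zs) as = endpt T (\<omega>, zs) bs"
  then have "pathsum T F (\<omega>, zs) as = pathsum T F (\<omega>, zs) bs"
    using assms(1) unfolding path_independent_def by blast
  moreover have "window_pathsum D zs as = window_pathsum D zs bs" using v assms(2) by blast
  ultimately show "pathsum T F (\<omega>, zs) as - window_pathsum D zs as =
      pathsum T F (\<omega>, zs) bs - window_pathsum D zs bs" by simp
qed

lemma endpt_eq_shift_iff:
  assumes es: "ergodic_system M T R" and "\<omega> \<in> space M" "zs \<in> lists R" "as \<in> lists R" "bs \<in> lists R"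
    and z: "z \<in> gen_group R"
  shows "endpt T (T z \<omega>, zs) as = endpt T (T z \<omega>, zs) bs \<longleftrightarrow> endpt T (\<omega>, zs) as = endpt T (\<omega>, zs) bs"
proof -
  let ?a = "endpt T (\<omega>, zs) as" and ?b = "endpt T (\<omega>, zs) bs"
  have "fst ?a \<in> space M" "fst ?b \<in> space M" using fst_endpt_in_space[OF es] assms(2-5) by auto
  then have "T z (fst ?a) = T z (fst ?b) \<longleftrightarrow> fst ?a = fst ?b"
    using inj_onD[OF ergodic_system_shift(3)[OF es z]] by metis
  then show ?thesis
    unfolding endpt_shift[OF es assms(2,3,4) z] endpt_shift[OF es assms(2,3,5) z] prod_eq_iff by simp
qed

(* The set where the two paths meet is shift invariant, so by ergodicity it is null or of full
   measure; this is the only use of ergodicity. *)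

lemma window_pathsum_mean_eq:
  assumes es: "ergodic_system M T R"
    and H: "\<And>zs z. zs \<in> lists R \<Longrightarrow> length zs = l \<Longrightarrow> z \<in> R \<Longrightarrow> integrable M (\<lambda>\<omega>. H (\<omega>, zs) z)"
    and H_pi: "AE \<omega> in M. path_independent T R l H \<omega>"
    and v: "zs \<in> lists R" "length zs = l" "as \<in> lists R" "bs \<in> lists R"
    and not_null: "\<not> (AE \<omega> in M. endpt T (\<omega>, zs) as \<noteq> endpt T (\<omega>, zs) bs)"
  shows "window_pathsum (\<lambda>zs z. \<integral>\<omega>. H (\<omega>, zs) z \<partial>M) zs as = window_pathsum (\<lambda>zs z. \<integral>\<omega>. H (\<omega>, zs) z \<partial>M) zs bs"
proof -
  define S where "S = {\<omega>. endpt T (\<omega>, zs) as = endpt T (\<omega>, zs) bs}"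
  note int_as = pathsum_integral[OF es, of l H, OF H v(3,1,2)]
    and int_bs = pathsum_integral[OF es, of l H, OF H v(4,1,2)]
  have "(AE \<omega> in M. \<omega> \<notin> S) \<or> (AE \<omega> in M. pathsum T H (\<omega>, zs) as - pathsum T H (\<omega>, zs) bs = 0)"
  proof (rule ergodic_system_null_or_AE_zero[OF es])
    show "T z \<omega> \<in> S \<longleftrightarrow> \<omega> \<in> S" if "z \<in> gen_group R" "\<omega> \<in> space M" for z \<omega>
      unfolding S_def using endpt_eq_shift_iff[OF es that(2) v(1,3,4) that(1)] by simp
    show "(\<lambda>\<omega>. pathsum T H (\<omega>, zs) as - pathsum T H (\<omega>, zs) bs) \<in> borel_measurable M"
      using int_as int_bs by auto
    show "AE \<omega> in M. \<omega> \<in> S \<longrightarrow> pathsum T H (\<omega>, zs) as - pathsum T H (\<omega>, zs) bs = 0"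
      using H_pi
    proof eventually_elim
      case (elim \<omega>)
      then have "\<omega> \<in> S \<Longrightarrow> pathsum T H (\<omega>, zs) as = pathsum T H (\<omega>, zs) bs"
        using v unfolding S_def path_independent_def by blast
      then show ?case by simp
    qed
  qed
  then have "AE \<omega> in M. pathsum T H (\<omega>, zs) as = pathsum T H (\<omega>, zs) bs"
    using not_null unfolding S_def by auto
  then have "(\<integral>\<omega>. pathsum T H (\<omega>, zs) as \<partial>M) = (\<integral>\<omega>. pathsum T H (\<omega>, zs) bs \<partial>M)"
    by (rule integral_cong_AE[rotated 2]) (use int_as int_bs in auto)
  then show ?thesis using int_as int_bs by simp
qed

lemma AE_path_independent_wsum_limit:
  fixes R :: "(int^'d) set"
  assumes es: "ergodic_system M T R" and fR: "finite R"
    and F_pi: "\<And>k. AE \<omega> in M. path_independent T R l (F k) \<omega>"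
    and L: "\<And>n. tail_weights n (L n)"
    and conv: "AE \<omega> in M. \<forall>zs z. zs \<in> lists R \<and> length zs = l \<and> z \<in> R \<longrightarrow>
                 (\<lambda>n. wsum (L n) (\<lambda>k. F k (\<omega>, zs) z)) \<longlonglongrightarrow> H (\<omega>, zs) z"
  shows "AE \<omega> in M. path_independent T R l H \<omega>"
proof -
  have "AE \<omega> in M. \<forall>as. as \<in> lists R \<longrightarrow> (\<forall>zs. zs \<in> lists R \<and> length zs = l \<longrightarrow>
      (\<lambda>n. pathsum T (\<lambda>\<eta> z. wsum (L n) (\<lambda>k. F k \<eta> z)) (\<omega>, zs) as) \<longlonglongrightarrow> pathsum T H (\<omega>, zs) as)"
    unfolding AE_all_countable
  proof
    fix as :: "(int^'d) list"
    show "AE \<omega> in M. as \<in> lists R \<longrightarrow> (\<forall>zs. zs \<in> lists R \<and> length zs = l \<longrightarrow>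
      (\<lambda>n. pathsum T (\<lambda>\<eta> z. wsum (L n) (\<lambda>k. F k \<eta> z)) (\<omega>, zs) as) \<longlonglongrightarrow> pathsum T H (\<omega>, zs) as)"
      using AE_pathsum_tendsto[OF es fR, where F = "\<lambda>n \<eta> z. wsum (L n) (\<lambda>k. F k \<eta> z)", OF conv]
      by (cases "as \<in> lists R") simp_all
  qed
  moreover have "AE \<omega> in M. \<forall>k. path_independent T R l (F k) \<omega>"
    using F_pi by (simp add: AE_all_countable)
  ultimately show ?thesis
  proof eventually_elim
    case (elim \<omega>)
    show ?case
    proof (rule path_independent_limit[where F = "\<lambda>n \<eta> z. wsum (L n) (\<lambda>k. F k \<eta> z)"])
      show "path_independent T R l (\<lambda>\<eta> z. wsum (L n) (\<lambda>k. F k \<eta> z)) \<omega>" for n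
        using elim(2) by (intro path_independent_wsum) simp
      show "(\<lambda>n. pathsum T (\<lambda>\<eta> z. wsum (L n) (\<lambda>k. F k \<eta> z)) (\<omega>, zs) as) \<longlonglongrightarrow> pathsum T H (\<omega>, zs) as"
        if "zs \<in> lists R" "length zs = l" "as \<in> lists R" for zs as
        using elim(1) that by blast
    qed
  qed
qed

lemma AE_window_pathsum_mean_diff_eq:
  fixes R :: "(int^'d) set"
  assumes es: "ergodic_system M T R"
    and FK: "\<And>k. classK M T R l (F k)"
    and means: "\<And>zs z. zs \<in> lists R \<Longrightarrow> length zs = l \<Longrightarrow> z \<in> R \<Longrightarrow>
                  (\<lambda>k. \<integral>\<omega>. F k (\<omega>, zs) z \<partial>M) \<longlonglongrightarrow> m zs z"
    and H: "\<And>zs z. zs \<in> lists R \<Longrightarrow> length zs = l \<Longrightarrow> z \<in> R \<Longrightarrow> integrable M (\<lambda>\<omega>. H (\<omega>, zs) z)"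
    and H_pi: "AE \<omega> in M. path_independent T R l H \<omega>"
  defines "D zs z \<equiv> (\<integral>\<omega>. H (\<omega>, zs) z \<partial>M) - m zs z"
  shows "AE \<omega> in M. \<forall>zs as bs. zs \<in> lists R \<and> length zs = l \<and> as \<in> lists R \<and> bs \<in> lists R \<and>
           endpt T (\<omega>, zs) as = endpt T (\<omega>, zs) bs \<longrightarrow> window_pathsum D zs as = window_pathsum D zs bs"
  unfolding AE_all_countable
proof (intro allI)
  fix zs as bs :: "(int^'d) list"
  show "AE \<omega> in M. zs \<in> lists R \<and> length zs = l \<and> as \<in> lists R \<and> bs \<in> lists R \<and>
          endpt T (\<omega>, zs) as = endpt T (\<omega>, zs) bs \<longrightarrow> window_pathsum D zs as = window_pathsum D zs bs"
  proof (cases "zs \<in> lists R \<and> length zs = l \<and> as \<in> lists R \<and> bs \<in> lists R \<and>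
                \<not> (AE \<omega> in M. endpt T (\<omega>, zs) as \<noteq> endpt T (\<omega>, zs) bs)")
    case True
    then have v: "zs \<in> lists R" "length zs = l" "as \<in> lists R" "bs \<in> lists R"
      and not_null: "\<not> (AE \<omega> in M. endpt T (\<omega>, zs) as \<noteq> endpt T (\<omega>, zs) bs)" by auto
    have F_int: "integrable M (\<lambda>\<omega>. F k (\<omega>, zs) z)" if "zs \<in> lists R" "length zs = l" "z \<in> R" for k zs z
      using FK[of k] that unfolding classK_iff by blast
    have F_eq: "window_pathsum (\<lambda>zs z. \<integral>\<omega>. F k (\<omega>, zs) z \<partial>M) zs as =
        window_pathsum (\<lambda>zs z. \<integral>\<omega>. F k (\<omega>, zs) z \<partial>M) zs bs" for k
      using window_pathsum_mean_eq[OF es, of l "F k", OF F_int _ v not_null] FK[of k]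
      unfolding classK_iff by blast
    have "window_pathsum m zs as = window_pathsum m zs bs"
      using window_pathsum_tendsto[where m = "\<lambda>k zs z. \<integral>\<omega>. F k (\<omega>, zs) z \<partial>M", OF means v(3,1,2)] window_pathsum_tendsto[where m = "\<lambda>k zs z. \<integral>\<omega>. F k (\<omega>, zs) z \<partial>M", OF means v(4,1,2)]
      unfolding F_eq by (rule LIMSEQ_unique)
    moreover have "window_pathsum (\<lambda>zs z. \<integral>\<omega>. H (\<omega>, zs) z \<partial>M) zs as =
        window_pathsum (\<lambda>zs z. \<integral>\<omega>. H (\<omega>, zs) z \<partial>M) zs bs"
      by (rule window_pathsum_mean_eq[OF es H H_pi v not_null])
    ultimately show ?thesis unfolding D_def window_pathsum_diff by simp
  next
    case False
    then consider "\<not> (zs \<in> lists R \<and> length zs = l \<and> as \<in> lists R \<and> bs \<in> lists R)"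
      | "AE \<omega> in M. endpt T (\<omega>, zs) as \<noteq> endpt T (\<omega>, zs) bs" by blast
    then show ?thesis
    proof cases
      case 1
      then show ?thesis by (intro AE_I2) blast
    next
      case 2
      then show ?thesis by (rule eventually_mono) blast
    qed
  qed
qed

lemma classK_limit:
  assumes es: "ergodic_system M T R" and fR: "finite R"
    and FK: "\<And>k. classK M T R l (F k)"
    and L: "\<And>n. tail_weights n (L n)"
    and H: "\<And>zs z. zs \<in> lists R \<Longrightarrow> length zs = l \<Longrightarrow> z \<in> R \<Longrightarrow> integrable M (\<lambda>\<omega>. H (\<omega>, zs) z)"
    and conv: "AE \<omega> in M. \<forall>zs z. zs \<in> lists R \<and> length zs = l \<and> z \<in> R \<longrightarrow>
                 (\<lambda>n. wsum (L n) (\<lambda>k. F k (\<omega>, zs) z)) \<longlonglongrightarrow> H (\<omega>, zs) z"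
    and means: "\<And>zs z. zs \<in> lists R \<Longrightarrow> length zs = l \<Longrightarrow> z \<in> R \<Longrightarrow>
                  (\<lambda>k. \<integral>\<omega>. F k (\<omega>, zs) z \<partial>M) \<longlonglongrightarrow> m zs z"
  shows "classK M T R l (\<lambda>\<eta> z. H \<eta> z - ((\<integral>\<omega>. H (\<omega>, snd \<eta>) z \<partial>M) - m (snd \<eta>) z))"
proof -
  interpret prob_space M using ergodic_system_prob_space[OF es] .
  define D where "D = (\<lambda>zs z. (\<integral>\<omega>. H (\<omega>, zs) z \<partial>M) - m zs z)"
  define G where "G \<eta> z = H \<eta> z - D (snd \<eta>) z" for \<eta> z
  have G_int: "integrable M (\<lambda>\<omega>. G (\<omega>, zs) z)" if "zs \<in> lists R" "length zs = l" "z \<in> R" for zs z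
    unfolding G_def using H[OF that] by simp
  have G_mean: "(\<integral>\<omega>. G (\<omega>, zs) z \<partial>M) = m zs z" if "zs \<in> lists R" "length zs = l" "z \<in> R" for zs z
    unfolding G_def D_def using H[OF that] by (simp add: prob_space)
  have "(\<integral>\<omega>. pathsum T G (\<omega>, drop (n - l) as) as \<partial>M) = 0"
    if "l \<le> n" "as \<in> lists R" "length as = n" for n as
  proof -
    have w: "drop (n - l) as \<in> lists R" "length (drop (n - l) as) = l"
      using that by (auto dest: in_set_dropD)
    have "(\<lambda>k. window_pathsum (\<lambda>zs z. \<integral>\<omega>. F k (\<omega>, zs) z \<partial>M) (drop (n - l) as) as) \<longlonglongrightarrow>
        window_pathsum m (drop (n - l) as) as"
      by (rule window_pathsum_tendsto[where m = "\<lambda>k zs z. \<integral>\<omega>. F k (\<omega>, zs) z \<partial>M", OF means that(2) w])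
    moreover have "window_pathsum (\<lambda>zs z. \<integral>\<omega>. F k (\<omega>, zs) z \<partial>M) (drop (n - l) as) as = 0" for k
      using pathsum_integral[OF es, of l "F k", OF _ that(2) w] FK[of k] that unfolding classK_iff by auto
    ultimately have "window_pathsum m (drop (n - l) as) as = 0" by (simp add: LIMSEQ_const_iff)
    then show ?thesis
      using pathsum_integral[OF es, of l G, OF G_int that(2) w] window_pathsum_cong[OF G_mean that(2) w] by simp
  qed
  moreover have "AE \<omega> in M. path_independent T R l G \<omega>"
  proof -
    have H_pi: "AE \<omega> in M. path_independent T R l H \<omega>"
      using FK by (intro AE_path_independent_wsum_limit[where L = L and H = H, OF es fR _ L conv]) (simp add: classK_iff)
    have "AE \<omega> in M. \<forall>zs as bs. zs \<in> lists R \<and> length zs = l \<and> as \<in> lists R \<and> bs \<in> lists R \<and>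
        endpt T (\<omega>, zs) as = endpt T (\<omega>, zs) bs \<longrightarrow> window_pathsum D zs as = window_pathsum D zs bs"
      unfolding D_def by (rule AE_window_pathsum_mean_diff_eq[where F = F and m = m and H = H, OF es FK]) (use means H H_pi in auto)
    with H_pi show ?thesis
      unfolding G_def
    proof eventually_elim
      case (elim \<omega>)
      show ?case by (rule path_independent_diff_window[OF elim(1)]) (use elim(2) in blast)
    qed
  qed
  ultimately have "classK M T R l G" using G_int unfolding classK_iff by blast
  then show ?thesis unfolding G_def D_def .
qed

lemma classK_mean_abs_le:
  assumes es: "ergodic_system M T R" and FK: "classK M T R l F"
    and GF: "AE \<omega> in M. \<forall>zs z. zs \<in> lists R \<and> length zs = l \<and> z \<in> R \<longrightarrow> G (\<omega>, zs) + F (\<omega>, zs) z \<le> C"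
    and G: "\<And>zs. zs \<in> lists R \<Longrightarrow> length zs = l \<Longrightarrow> integrable M (\<lambda>\<omega>. G (\<omega>, zs))"
    and GB: "\<And>zs. zs \<in> lists R \<Longrightarrow> length zs = l \<Longrightarrow> \<bar>\<integral>\<omega>. G (\<omega>, zs) \<partial>M\<bar> \<le> B"
    and v: "zs \<in> lists R" "length zs = l" "z \<in> R"
  shows "\<bar>\<integral>\<omega>. F (\<omega>, zs) z \<partial>M\<bar> \<le> (real l + 1) * \<bar>C + B\<bar>"
proof -
  interpret prob_space M using ergodic_system_prob_space[OF es] .
  have F_int: "integrable M (\<lambda>\<omega>. F (\<omega>, zs) z)" if "zs \<in> lists R" "length zs = l" "z \<in> R" for zs z
    using FK that unfolding classK_iff by blast
  have upper: "(\<integral>\<omega>. F (\<omega>, zs) z \<partial>M) \<le> C + B" if w: "zs \<in> lists R" "length zs = l" "z \<in> R" for zs z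
  proof -
    have "(\<integral>\<omega>. F (\<omega>, zs) z \<partial>M) \<le> (\<integral>\<omega>. C - G (\<omega>, zs) \<partial>M)"
    proof (intro integral_mono_AE F_int w)
      show "integrable M (\<lambda>\<omega>. C - G (\<omega>, zs))" using G[OF w(1,2)] by simp
      show "AE \<omega> in M. F (\<omega>, zs) z \<le> C - G (\<omega>, zs)"
      proof (rule eventually_mono[OF GF])
        fix \<omega> assume "\<forall>zs z. zs \<in> lists R \<and> length zs = l \<and> z \<in> R \<longrightarrow> G (\<omega>, zs) + F (\<omega>, zs) z \<le> C"
        then have "G (\<omega>, zs) + F (\<omega>, zs) z \<le> C" using w by blast
        then show "F (\<omega>, zs) z \<le> C - G (\<omega>, zs)" by simp
      qed
    qed
    also have "\<dots> = C - (\<integral>\<omega>. G (\<omega>, zs) \<partial>M)" using G[OF w(1,2)] by (simp add: prob_space)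
    finally show ?thesis using GB[OF w(1,2)] by linarith
  qed
  (* The lower bound comes from the mean-zero condition along the path z # zs, which returns to
     its starting window. *)
  have "\<forall>n as. l \<le> n \<and> as \<in> lists R \<and> length as = n \<longrightarrow>
      (\<integral>\<omega>. pathsum T F (\<omega>, drop (n - l) as) as \<partial>M) = 0"
    using FK unfolding classK_iff by blast
  then have "(\<integral>\<omega>. pathsum T F (\<omega>, drop (Suc l - l) (z # zs)) (z # zs) \<partial>M) = 0"
    using v by (metis Cons_in_lists_iff le_SucI length_Cons order_refl)
  then have "(\<integral>\<omega>. pathsum T F (\<omega>, zs) (z # zs) \<partial>M) = 0" by (simp del: pathsum.simps)
  moreover have "(\<integral>\<omega>. pathsum T F (\<omega>, zs) (z # zs) \<partial>M) =
      window_pathsum (\<lambda>zs z. \<integral>\<omega>. F (\<omega>, zs) z \<partial>M) zs (z # zs)"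
    using pathsum_integral[OF es, of l F, OF F_int _ v(1,2), of "z # zs"] v
    by (simp del: pathsum.simps window_pathsum.simps)
  moreover have "window_pathsum (\<lambda>zs z. \<integral>\<omega>. F (\<omega>, zs) z \<partial>M) (shift_window z zs) zs \<le> real l * (C + B)"
    using window_pathsum_le[where R = R and l = l and m = "\<lambda>zs z. \<integral>\<omega>. F (\<omega>, zs) z \<partial>M", OF upper v(1) shift_window_in_lists[OF v(1,3)]] v(2)
    by simp
  ultimately have "- (\<integral>\<omega>. F (\<omega>, zs) z \<partial>M) \<le> real l * (C + B)" by simp
  also have "\<dots> \<le> real l * \<bar>C + B\<bar>" by (intro mult_left_mono) auto
  also have "\<dots> \<le> (real l + 1) * \<bar>C + B\<bar>" by (intro mult_right_mono) auto
  finally have "- (\<integral>\<omega>. F (\<omega>, zs) z \<partial>M) \<le> (real l + 1) * \<bar>C + B\<bar>" .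
  moreover have "(\<integral>\<omega>. F (\<omega>, zs) z \<partial>M) \<le> (real l + 1) * \<bar>C + B\<bar>"
  proof -
    have "(\<integral>\<omega>. F (\<omega>, zs) z \<partial>M) \<le> 1 * \<bar>C + B\<bar>" using upper[OF v] by simp
    also have "\<dots> \<le> (real l + 1) * \<bar>C + B\<bar>" by (intro mult_right_mono) auto
    finally show ?thesis .
  qed
  ultimately show ?thesis by (simp add: abs_le_iff)
qed

lemma le_of_mean_exp_le:
  assumes "finite R" "z \<in> R" "(\<Sum>z\<in>R. exp (a + b z) / real (card R)) \<le> exp c"
  shows "a + b z \<le> c + ln (real (card R))"
proof -
  have cR: "0 < real (card R)" using assms(1,2) card_gt_0_iff by fastforce
  have "exp (a + b z) / real (card R) \<le> (\<Sum>z\<in>R. exp (a + b z) / real (card R))"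
    by (rule member_le_sum) (use assms in auto)
  then have "exp (a + b z) / real (card R) \<le> exp c" using assms(3) by (rule order_trans)
  then have "exp (a + b z) \<le> exp c * real (card R)" using cR by (simp add: divide_le_eq)
  also have "\<dots> = exp (c + ln (real (card R)))" using cR by (simp add: exp_add)
  finally show ?thesis by simp
qed

lemma AE_le_of_AE_mean_exp_le:
  assumes fR: "finite R"
    and bound: "AE \<omega> in M. \<forall>k zs. zs \<in> lists R \<and> length zs = l \<longrightarrow>
                  (\<Sum>z\<in>R. exp (G k (\<omega>, zs) + F k (\<omega>, zs) z) / real (card R)) \<le> exp c"
  shows "AE \<omega> in M. \<forall>k zs z. zs \<in> lists R \<and> length zs = l \<and> z \<in> R \<longrightarrow>
           G k (\<omega>, zs) + F k (\<omega>, zs) z \<le> c + ln (real (card R))"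
proof (rule eventually_mono[OF bound], intro allI impI)
  fix \<omega> k zs z
  assume "\<forall>k zs. zs \<in> lists R \<and> length zs = l \<longrightarrow>
      (\<Sum>z\<in>R. exp (G k (\<omega>, zs) + F k (\<omega>, zs) z) / real (card R)) \<le> exp c"
    and "zs \<in> lists R \<and> length zs = l \<and> z \<in> R"
  then show "G k (\<omega>, zs) + F k (\<omega>, zs) z \<le> c + ln (real (card R))"
    by (intro le_of_mean_exp_le[OF fR, where b = "F k (\<omega>, zs)"]) auto
qed

lemma mean_exp_wsum_le:
  assumes L: "tail_weights n L" and bound: "\<And>k. (\<Sum>z\<in>R. exp (a k + b k z) / d) \<le> E" and d: "0 < d"
  shows "(\<Sum>z\<in>R. exp (wsum L a + wsum L (\<lambda>k. b k z)) / d) \<le> E"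
proof -
  have "(\<Sum>z\<in>R. exp (wsum L a + wsum L (\<lambda>k. b k z)) / d) \<le> (\<Sum>z\<in>R. wsum L (\<lambda>k. exp (a k + b k z)) / d)"
    using exp_wsum_le[OF L] d unfolding wsum_add[symmetric] by (intro sum_mono divide_right_mono) auto
  also have "\<dots> = wsum L (\<lambda>k. \<Sum>z\<in>R. exp (a k + b k z) / d)" by (simp add: wsum_sum wsum_divide)
  also have "\<dots> \<le> wsum L (\<lambda>k. E)" by (rule wsum_mono[OF L bound])
  finally show ?thesis using wsum_const[OF L] by simp
qed

lemma AE_mean_exp_le_of_wsum_limit:
  assumes fR: "finite R" and Rne: "R \<noteq> {}" and L: "\<And>n. tail_weights n (L n)"
    and bound: "AE \<omega> in M. \<forall>k zs. zs \<in> lists R \<and> length zs = l \<longrightarrow>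
                  (\<Sum>z\<in>R. exp (G k (\<omega>, zs) + F k (\<omega>, zs) z) / real (card R)) \<le> exp c"
    and G: "AE \<omega> in M. \<forall>zs. zs \<in> lists R \<and> length zs = l \<longrightarrow>
              (\<lambda>n. wsum (L n) (\<lambda>k. G k (\<omega>, zs))) \<longlonglongrightarrow> g (\<omega>, zs)"
    and F: "AE \<omega> in M. \<forall>zs z. zs \<in> lists R \<and> length zs = l \<and> z \<in> R \<longrightarrow>
              (\<lambda>n. wsum (L n) (\<lambda>k. F k (\<omega>, zs) z)) \<longlonglongrightarrow> H (\<omega>, zs) z"
  shows "AE \<omega> in M. \<forall>zs. zs \<in> lists R \<and> length zs = l \<longrightarrow>
           (\<Sum>z\<in>R. exp (g (\<omega>, zs) + H (\<omega>, zs) z) / real (card R)) \<le> exp c"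
  using bound G F
proof eventually_elim
  case (elim \<omega>)
  show ?case
  proof (intro allI impI)
    fix zs assume zs: "zs \<in> lists R \<and> length zs = l"
    have cR: "0 < real (card R)" using fR Rne by (simp add: card_gt_0_iff)
    have lim: "(\<lambda>n. \<Sum>z\<in>R. exp (wsum (L n) (\<lambda>k. G k (\<omega>, zs)) + wsum (L n) (\<lambda>k. F k (\<omega>, zs) z)) / real (card R))
        \<longlonglongrightarrow> (\<Sum>z\<in>R. exp (g (\<omega>, zs) + H (\<omega>, zs) z) / real (card R))"
      using elim(2,3) zs cR by (intro tendsto_intros) auto
    have "(\<Sum>z\<in>R. exp (wsum (L n) (\<lambda>k. G k (\<omega>, zs)) + wsum (L n) (\<lambda>k. F k (\<omega>, zs) z)) / real (card R))
        \<le> exp c" for n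
      using elim(1) zs by (intro mean_exp_wsum_le[OF L _ cR]) blast
    then show "(\<Sum>z\<in>R. exp (g (\<omega>, zs) + H (\<omega>, zs) z) / real (card R)) \<le> exp c"
      by (intro LIMSEQ_le_const2[OF lim]) blast
  qed
qed

lemma AE_mean_exp_le_of_KlF_less:
  assumes fR: "finite R" and Rne: "R \<noteq> {}" and less: "KlF M R l F g < ereal c"
  shows "AE \<omega> in M. \<forall>zs. zs \<in> lists R \<and> length zs = l \<longrightarrow>
           (\<Sum>z\<in>R. exp (g (\<omega>, zs) + F (\<omega>, zs) z) / real (card R)) \<le> exp c"
proof -
  let ?\<Phi> = "\<lambda>\<omega> zs. ln (\<Sum>z\<in>R. exp (g (\<omega>, zs) + F (\<omega>, zs) z) / real (card R))"
  have "AE \<omega> in M. ereal (Max (?\<Phi> \<omega> ` {zs. zs \<in> lists R \<and> length zs = l})) \<le> KlF M R l F g"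
    unfolding KlF_def by (rule esssup_AE)
  then show ?thesis
  proof eventually_elim
    case (elim \<omega>)
    show ?case
    proof (intro allI impI)
      fix zs assume zs: "zs \<in> lists R \<and> length zs = l"
      have "?\<Phi> \<omega> zs \<le> Max (?\<Phi> \<omega> ` {zs. zs \<in> lists R \<and> length zs = l})"
        by (rule Max_ge) (use finite_windows[OF fR] zs in auto)
      then have "?\<Phi> \<omega> zs < c" using le_less_trans[OF elim less] by simp
      moreover have "0 < (\<Sum>z\<in>R. exp (g (\<omega>, zs) + F (\<omega>, zs) z) / real (card R))"
        using fR Rne by (intro sum_pos) (auto simp: card_gt_0_iff)
      ultimately show "(\<Sum>z\<in>R. exp (g (\<omega>, zs) + F (\<omega>, zs) z) / real (card R)) \<le> exp c"
        using exp_less_cancel_iff[of "?\<Phi> \<omega> zs" c] by simp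
    qed
  qed
qed

lemma KlF_le_of_AE_mean_exp_le:
  assumes fR: "finite R" and Rne: "R \<noteq> {}"
    and g: "\<And>zs. zs \<in> lists R \<Longrightarrow> length zs = l \<Longrightarrow> (\<lambda>\<omega>. g (\<omega>, zs)) \<in> borel_measurable M"
    and F: "\<And>zs z. zs \<in> lists R \<Longrightarrow> length zs = l \<Longrightarrow> z \<in> R \<Longrightarrow> (\<lambda>\<omega>. F (\<omega>, zs) z) \<in> borel_measurable M"
    and bound: "AE \<omega> in M. \<forall>zs. zs \<in> lists R \<and> length zs = l \<longrightarrow>
                  (\<Sum>z\<in>R. exp (g (\<omega>, zs) + F (\<omega>, zs) z) / real (card R)) \<le> exp c"
  shows "KlF M R l F g \<le> ereal c"
proof -
  let ?Zs = "{zs. zs \<in> lists R \<and> length zs = l}"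
  let ?\<Phi> = "\<lambda>zs \<omega>. ln (\<Sum>z\<in>R. exp (g (\<omega>, zs) + F (\<omega>, zs) z) / real (card R))"
  have "?\<Phi> zs \<in> borel_measurable M" if "zs \<in> ?Zs" for zs
    using g[of zs] F[of zs] that by (intro borel_measurable_ln borel_measurable_sum) auto
  then have "(\<lambda>\<omega>. Max ((\<lambda>zs. ?\<Phi> zs \<omega>) ` ?Zs)) \<in> borel_measurable M"
    by (rule borel_measurable_Max[OF finite_windows[OF fR]])
  moreover have "AE \<omega> in M. Max ((\<lambda>zs. ?\<Phi> zs \<omega>) ` ?Zs) \<le> c"
    using bound
  proof eventually_elim
    case (elim \<omega>)
    have "?\<Phi> zs \<omega> \<le> c" if "zs \<in> ?Zs" for zs
    proof -
      have "0 < (\<Sum>z\<in>R. exp (g (\<omega>, zs) + F (\<omega>, zs) z) / real (card R))"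
        using fR Rne by (intro sum_pos) (auto simp: card_gt_0_iff)
      then have "?\<Phi> zs \<omega> \<le> ln (exp c)" using elim that by (subst ln_le_cancel_iff) auto
      then show ?thesis by simp
    qed
    then show ?case using finite_windows[OF fR] windows_nonempty[OF Rne] by (subst Max_le_iff) auto
  qed
  ultimately show ?thesis unfolding KlF_def by (intro esssup_I) auto
qed

section \<open>Lower semicontinuity of the infimum over K\<close>

lemma (in prob_space) exists_tail_wsum_limit:
  fixes G :: "nat \<Rightarrow> 'a \<times> 'z list \<Rightarrow> real" and g :: "'a \<times> 'z list \<Rightarrow> real"
    and F :: "nat \<Rightarrow> 'a \<times> 'z list \<Rightarrow> 'z \<Rightarrow> real"
  assumes fR: "finite R"
    and g: "\<And>zs. zs \<in> lists R \<Longrightarrow> length zs = l \<Longrightarrow> integrable M (\<lambda>\<omega>. g (\<omega>, zs))"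
    and G: "\<And>k zs. zs \<in> lists R \<Longrightarrow> length zs = l \<Longrightarrow> integrable M (\<lambda>\<omega>. G k (\<omega>, zs))"
    and G_L1: "\<And>zs. zs \<in> lists R \<Longrightarrow> length zs = l \<Longrightarrow>
                 (\<lambda>k. \<integral>\<omega>. \<bar>G k (\<omega>, zs) - g (\<omega>, zs)\<bar> \<partial>M) \<longlonglongrightarrow> 0"
    and G_AE: "AE \<omega> in M. \<forall>zs. zs \<in> lists R \<and> length zs = l \<longrightarrow> (\<lambda>k. G k (\<omega>, zs)) \<longlonglongrightarrow> g (\<omega>, zs)"
    and F: "\<And>k zs z. zs \<in> lists R \<Longrightarrow> length zs = l \<Longrightarrow> z \<in> R \<Longrightarrow> integrable M (\<lambda>\<omega>. F k (\<omega>, zs) z)"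
    and GF_le: "AE \<omega> in M. \<forall>k zs z. zs \<in> lists R \<and> length zs = l \<and> z \<in> R \<longrightarrow>
                  G k (\<omega>, zs) + F k (\<omega>, zs) z \<le> C"
    and means: "\<And>zs z. zs \<in> lists R \<Longrightarrow> length zs = l \<Longrightarrow> z \<in> R \<Longrightarrow>
                  (\<lambda>k. \<integral>\<omega>. F k (\<omega>, zs) z \<partial>M) \<longlonglongrightarrow> m zs z"
  obtains L H where "\<And>n. tail_weights n (L n)"
    and "\<And>zs z. zs \<in> lists R \<Longrightarrow> length zs = l \<Longrightarrow> z \<in> R \<Longrightarrow> integrable M (\<lambda>\<omega>. H (\<omega>, zs) z)"
    and "\<And>zs z. zs \<in> lists R \<Longrightarrow> length zs = l \<Longrightarrow> z \<in> R \<Longrightarrow> m zs z \<le> (\<integral>\<omega>. H (\<omega>, zs) z \<partial>M)"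
    and "AE \<omega> in M. \<forall>zs. zs \<in> lists R \<and> length zs = l \<longrightarrow>
           (\<lambda>n. wsum (L n) (\<lambda>k. G k (\<omega>, zs))) \<longlonglongrightarrow> g (\<omega>, zs)"
    and "AE \<omega> in M. \<forall>zs z. zs \<in> lists R \<and> length zs = l \<and> z \<in> R \<longrightarrow>
           (\<lambda>n. wsum (L n) (\<lambda>k. F k (\<omega>, zs) z)) \<longlonglongrightarrow> H (\<omega>, zs) z"
proof -
  define I where "I = {zs. zs \<in> lists R \<and> length zs = l} \<times> R"
  have I: "i \<in> I \<longleftrightarrow> fst i \<in> lists R \<and> length (fst i) = l \<and> snd i \<in> R" for i
    unfolding I_def by (auto simp: mem_Times_iff)
  define X where "X k i \<omega> = G k (\<omega>, fst i) + F k (\<omega>, fst i) (snd i)" for k i \<omega>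
  have "\<exists>L Y. (\<forall>n. tail_weights n (L n)) \<and> (\<forall>i\<in>I. integrable M (Y i) \<and>
           (\<integral>\<omega>. g (\<omega>, fst i) \<partial>M) + m (fst i) (snd i) \<le> (\<integral>\<omega>. Y i \<omega> \<partial>M) \<and>
           (AE \<omega> in M. (\<lambda>n. wsum (L n) (\<lambda>k. X k i \<omega>)) \<longlonglongrightarrow> Y i \<omega>))"
  proof (rule komlos_bounded_above)
    show "finite I" unfolding I_def using finite_windows[OF fR] fR by simp
    show "integrable M (X k i)" if "i \<in> I" for k i
      using G F that unfolding X_def I by simp
    show "AE \<omega> in M. \<forall>k. \<forall>i\<in>I. X k i \<omega> \<le> C"
      using GF_le by (rule eventually_mono) (auto simp: X_def I)
    show "(\<lambda>k. \<integral>\<omega>. X k i \<omega> \<partial>M) \<longlonglongrightarrow> (\<integral>\<omega>. g (\<omega>, fst i) \<partial>M) + m (fst i) (snd i)" if "i \<in> I" for i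
      using that G F integral_tendsto_of_L1[OF G g G_L1] means unfolding X_def I
      by (simp add: tendsto_add)
  qed
  then obtain L Y where L: "\<And>n. tail_weights n (L n)"
    and Y: "\<And>i. i \<in> I \<Longrightarrow> integrable M (Y i)"
      "\<And>i. i \<in> I \<Longrightarrow> (\<integral>\<omega>. g (\<omega>, fst i) \<partial>M) + m (fst i) (snd i) \<le> (\<integral>\<omega>. Y i \<omega> \<partial>M)"
      "\<And>i. i \<in> I \<Longrightarrow> AE \<omega> in M. (\<lambda>n. wsum (L n) (\<lambda>k. X k i \<omega>)) \<longlonglongrightarrow> Y i \<omega>"
    by blast
  define H where "H \<eta> z = Y (snd \<eta>, z) (fst \<eta>) - g \<eta>" for \<eta> z
  have G_wsum: "AE \<omega> in M. \<forall>zs. zs \<in> lists R \<and> length zs = l \<longrightarrow>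
      (\<lambda>n. wsum (L n) (\<lambda>k. G k (\<omega>, zs))) \<longlonglongrightarrow> g (\<omega>, zs)"
    using G_AE by eventually_elim (blast intro: wsum_tendsto[OF L])
  have "AE \<omega> in M. \<forall>i\<in>I. (\<lambda>n. wsum (L n) (\<lambda>k. X k i \<omega>)) \<longlonglongrightarrow> Y i \<omega>"
    using Y(3) by (intro AE_finite_allI) (simp_all add: I_def finite_windows[OF fR] fR)
  with G_wsum have "AE \<omega> in M. \<forall>zs z. zs \<in> lists R \<and> length zs = l \<and> z \<in> R \<longrightarrow>
      (\<lambda>n. wsum (L n) (\<lambda>k. F k (\<omega>, zs) z)) \<longlonglongrightarrow> H (\<omega>, zs) z"
  proof eventually_elim
    case (elim \<omega>)
    show ?case
    proof (intro allI impI)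
      fix zs z assume v: "zs \<in> lists R \<and> length zs = l \<and> z \<in> R"
      have "wsum (L n) (\<lambda>k. F k (\<omega>, zs) z) = wsum (L n) (\<lambda>k. X k (zs, z) \<omega>) - wsum (L n) (\<lambda>k. G k (\<omega>, zs))" for n
        unfolding X_def wsum_add by simp
      moreover have "(\<lambda>n. wsum (L n) (\<lambda>k. X k (zs, z) \<omega>) - wsum (L n) (\<lambda>k. G k (\<omega>, zs))) \<longlonglongrightarrow> H (\<omega>, zs) z"
        unfolding H_def using elim v I by (intro tendsto_diff) auto
      ultimately show "(\<lambda>n. wsum (L n) (\<lambda>k. F k (\<omega>, zs) z)) \<longlonglongrightarrow> H (\<omega>, zs) z" by simp
    qed
  qed
  moreover have "integrable M (\<lambda>\<omega>. H (\<omega>, zs) z)" "m zs z \<le> (\<integral>\<omega>. H (\<omega>, zs) z \<partial>M)"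
    if "zs \<in> lists R" "length zs = l" "z \<in> R" for zs z
    unfolding H_def using Y(1,2)[of "(zs, z)"] g that I by simp_all
  ultimately show ?thesis using that L G_wsum by blast
qed

lemma underK_le_of_AE_mean_exp_le:
  fixes M :: "'a measure" and T :: "int^'d \<Rightarrow> 'a \<Rightarrow> 'a" and R :: "(int^'d) set"
    and G :: "nat \<Rightarrow> 'a \<times> (int^'d) list \<Rightarrow> real" and g :: "'a \<times> (int^'d) list \<Rightarrow> real"
    and F :: "nat \<Rightarrow> 'a \<times> (int^'d) list \<Rightarrow> int^'d \<Rightarrow> real"
  assumes es: "ergodic_system M T R" and fR: "finite R" and Rne: "R \<noteq> {}"
    and g: "\<And>zs. zs \<in> lists R \<Longrightarrow> length zs = l \<Longrightarrow> integrable M (\<lambda>\<omega>. g (\<omega>, zs))"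
    and G: "\<And>k zs. zs \<in> lists R \<Longrightarrow> length zs = l \<Longrightarrow> integrable M (\<lambda>\<omega>. G k (\<omega>, zs))"
    and G_L1: "\<And>zs. zs \<in> lists R \<Longrightarrow> length zs = l \<Longrightarrow>
                 (\<lambda>k. \<integral>\<omega>. \<bar>G k (\<omega>, zs) - g (\<omega>, zs)\<bar> \<partial>M) \<longlonglongrightarrow> 0"
    and G_AE: "AE \<omega> in M. \<forall>zs. zs \<in> lists R \<and> length zs = l \<longrightarrow> (\<lambda>k. G k (\<omega>, zs)) \<longlonglongrightarrow> g (\<omega>, zs)"
    and FK: "\<And>k. classK M T R l (F k)"
    and bound: "AE \<omega> in M. \<forall>k zs. zs \<in> lists R \<and> length zs = l \<longrightarrow>
                  (\<Sum>z\<in>R. exp (G k (\<omega>, zs) + F k (\<omega>, zs) z) / real (card R)) \<le> exp c"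
    and means: "\<And>zs z. zs \<in> lists R \<Longrightarrow> length zs = l \<Longrightarrow> z \<in> R \<Longrightarrow>
                  (\<lambda>k. \<integral>\<omega>. F k (\<omega>, zs) z \<partial>M) \<longlonglongrightarrow> m zs z"
  shows "underK M T R l g \<le> ereal c"
proof -
  interpret prob_space M using ergodic_system_prob_space[OF es] .
  have F_int: "integrable M (\<lambda>\<omega>. F k (\<omega>, zs) z)" if "zs \<in> lists R" "length zs = l" "z \<in> R" for k zs z
    using FK[of k] that unfolding classK_iff by blast
  obtain L H where L: "\<And>n. tail_weights n (L n)"
    and H_int: "\<And>zs z. zs \<in> lists R \<Longrightarrow> length zs = l \<Longrightarrow> z \<in> R \<Longrightarrow> integrable M (\<lambda>\<omega>. H (\<omega>, zs) z)"
    and H_mean: "\<And>zs z. zs \<in> lists R \<Longrightarrow> length zs = l \<Longrightarrow> z \<in> R \<Longrightarrow> m zs z \<le> (\<integral>\<omega>. H (\<omega>, zs) z \<partial>M)"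
    and G_wsum: "AE \<omega> in M. \<forall>zs. zs \<in> lists R \<and> length zs = l \<longrightarrow>
                   (\<lambda>n. wsum (L n) (\<lambda>k. G k (\<omega>, zs))) \<longlonglongrightarrow> g (\<omega>, zs)"
    and H_conv: "AE \<omega> in M. \<forall>zs z. zs \<in> lists R \<and> length zs = l \<and> z \<in> R \<longrightarrow>
                   (\<lambda>n. wsum (L n) (\<lambda>k. F k (\<omega>, zs) z)) \<longlonglongrightarrow> H (\<omega>, zs) z"
    using exists_tail_wsum_limit[where g = g and G = G and F = F and m = m,
        OF fR g G G_L1 G_AE F_int AE_le_of_AE_mean_exp_le[OF fR bound] means]
    by blast
  define F' where "F' \<eta> z = H \<eta> z - ((\<integral>\<omega>. H (\<omega>, snd \<eta>) z \<partial>M) - m (snd \<eta>) z)" for \<eta> z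
  have "classK M T R l F'"
    unfolding F'_def using classK_limit[where F = F and H = H and m = m, OF es fR FK L H_int H_conv means] .
  moreover have "KlF M R l F' g \<le> ereal c"
  proof (rule KlF_le_of_AE_mean_exp_le[OF fR Rne])
    show "(\<lambda>\<omega>. g (\<omega>, zs)) \<in> borel_measurable M" if "zs \<in> lists R" "length zs = l" for zs
      using g[OF that] by auto
    show "(\<lambda>\<omega>. F' (\<omega>, zs) z) \<in> borel_measurable M" if "zs \<in> lists R" "length zs = l" "z \<in> R" for zs z
      using H_int[OF that] unfolding F'_def by auto
    show "AE \<omega> in M. \<forall>zs. zs \<in> lists R \<and> length zs = l \<longrightarrow>
        (\<Sum>z\<in>R. exp (g (\<omega>, zs) + F' (\<omega>, zs) z) / real (card R)) \<le> exp c"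
      using AE_mean_exp_le_of_wsum_limit[OF fR Rne L bound G_wsum H_conv]
    proof eventually_elim
      case (elim \<omega>)
      show ?case
      proof (intro allI impI)
        fix zs assume zs: "zs \<in> lists R \<and> length zs = l"
        then have "(\<Sum>z\<in>R. exp (g (\<omega>, zs) + F' (\<omega>, zs) z) / real (card R))
            \<le> (\<Sum>z\<in>R. exp (g (\<omega>, zs) + H (\<omega>, zs) z) / real (card R))"
          using H_mean unfolding F'_def by (intro sum_mono divide_right_mono) auto
        also have "\<dots> \<le> exp c" using elim zs by blast
        finally show "(\<Sum>z\<in>R. exp (g (\<omega>, zs) + F' (\<omega>, zs) z) / real (card R)) \<le> exp c" .
      qed
    qed
  qed
  ultimately show ?thesis unfolding underK_def by (intro INF_lower2) auto
qed

lemma underK_le_of_liminf_less: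
  fixes M :: "'a measure" and T :: "int^'d \<Rightarrow> 'a \<Rightarrow> 'a" and R :: "(int^'d) set"
    and gk :: "nat \<Rightarrow> 'a \<times> (int^'d) list \<Rightarrow> real" and g :: "'a \<times> (int^'d) list \<Rightarrow> real"
  assumes fR: "finite R" and Rne: "R \<noteq> {}" and es: "ergodic_system M T R"
    and gk: "\<And>k zs. zs \<in> lists R \<Longrightarrow> length zs = l \<Longrightarrow> integrable M (\<lambda>\<omega>. gk k (\<omega>, zs))"
    and g: "\<And>zs. zs \<in> lists R \<Longrightarrow> length zs = l \<Longrightarrow> integrable M (\<lambda>\<omega>. g (\<omega>, zs))"
    and L1: "\<And>zs. zs \<in> lists R \<Longrightarrow> length zs = l \<Longrightarrow> (\<lambda>k. \<integral>\<omega>. \<bar>gk k (\<omega>, zs) - g (\<omega>, zs)\<bar> \<partial>M) \<longlonglongrightarrow> 0"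
    and less: "liminf (\<lambda>k. underK M T R l (gk k)) < ereal c"
  shows "underK M T R l g \<le> ereal c"
proof -
  let ?Zs = "{zs. zs \<in> lists R \<and> length zs = l}"
  obtain \<phi> :: "nat \<Rightarrow> nat" where \<phi>: "strict_mono \<phi>" "\<And>j. underK M T R l (gk (\<phi> j)) < ereal c"
    using liminf_less_imp_subseq[OF less] by blast
  then have "\<forall>j. \<exists>F. classK M T R l F \<and> KlF M R l F (gk (\<phi> j)) < ereal c"
    unfolding underK_def INF_less_iff by blast
  then obtain F where FK: "\<And>j. classK M T R l (F j)" and KF: "\<And>j. KlF M R l (F j) (gk (\<phi> j)) < ereal c"
    by metis
  have bound: "AE \<omega> in M. \<forall>j zs. zs \<in> lists R \<and> length zs = l \<longrightarrow>
      (\<Sum>z\<in>R. exp (gk (\<phi> j) (\<omega>, zs) + F j (\<omega>, zs) z) / real (card R)) \<le> exp c"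
  proof (subst AE_all_countable, intro allI)
    fix j
    show "AE \<omega> in M. \<forall>zs. zs \<in> lists R \<and> length zs = l \<longrightarrow>
        (\<Sum>z\<in>R. exp (gk (\<phi> j) (\<omega>, zs) + F j (\<omega>, zs) z) / real (card R)) \<le> exp c"
      by (rule AE_mean_exp_le_of_KlF_less[OF fR Rne KF])
  qed
  have GF_le: "AE \<omega> in M. \<forall>zs z. zs \<in> lists R \<and> length zs = l \<and> z \<in> R \<longrightarrow>
      gk (\<phi> j) (\<omega>, zs) + F j (\<omega>, zs) z \<le> c + ln (real (card R))" for j
    using AE_le_of_AE_mean_exp_le[OF fR bound] by (rule eventually_mono) blast
  have L1_\<phi>: "(\<lambda>j. \<integral>\<omega>. \<bar>gk (\<phi> j) (\<omega>, zs) - g (\<omega>, zs)\<bar> \<partial>M) \<longlonglongrightarrow> 0" if "zs \<in> ?Zs" for zs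
    using LIMSEQ_subseq_LIMSEQ[OF L1 \<phi>(1)] that by (simp add: o_def)
  obtain B where B: "\<And>j zs. zs \<in> ?Zs \<Longrightarrow> \<bar>\<integral>\<omega>. gk (\<phi> j) (\<omega>, zs) \<partial>M\<bar> \<le> B"
    by (rule bounded_integrals_of_L1_tendsto[where M = M and f = "\<lambda>j zs \<omega>. gk (\<phi> j) (\<omega>, zs)"
          and h = "\<lambda>zs \<omega>. g (\<omega>, zs)", OF finite_windows[OF fR]]) (auto intro: gk g L1_\<phi>)
  have means_bounded: "\<bar>\<integral>\<omega>. F j (\<omega>, zs) z \<partial>M\<bar> \<le> (real l + 1) * \<bar>c + ln (real (card R)) + B\<bar>"
    if "zs \<in> lists R" "length zs = l" "z \<in> R" for j zs z
    by (rule classK_mean_abs_le[OF es FK[of j] GF_le[of j]]) (use gk B that in auto)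
  have "\<exists>r::nat\<Rightarrow>nat. strict_mono r \<and>
      (\<forall>zs\<in>?Zs. AE \<omega> in M. (\<lambda>j. gk (\<phi> (r j)) (\<omega>, zs)) \<longlonglongrightarrow> g (\<omega>, zs)) \<and>
      (\<forall>i\<in>?Zs \<times> R. convergent (\<lambda>j. \<integral>\<omega>. F (r j) (\<omega>, fst i) (snd i) \<partial>M))"
  proof (rule exists_subseq_AE_tendsto_convergent[of ?Zs "?Zs \<times> R" M "\<lambda>j zs \<omega>. gk (\<phi> j) (\<omega>, zs)"
        "\<lambda>zs \<omega>. g (\<omega>, zs)" "\<lambda>j i. \<integral>\<omega>. F j (\<omega>, fst i) (snd i) \<partial>M"])
    show "bounded (range (\<lambda>j. \<integral>\<omega>. F j (\<omega>, fst i) (snd i) \<partial>M))" if "i \<in> ?Zs \<times> R" for i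
      using means_bounded that by (intro boundedI[where B = "(real l + 1) * \<bar>c + ln (real (card R)) + B\<bar>"])
        (auto simp: mem_Times_iff)
  qed (use finite_windows[OF fR] fR gk g L1_\<phi> in auto)
  then obtain r :: "nat \<Rightarrow> nat" where r: "strict_mono r"
    "\<forall>zs\<in>?Zs. AE \<omega> in M. (\<lambda>j. gk (\<phi> (r j)) (\<omega>, zs)) \<longlonglongrightarrow> g (\<omega>, zs)"
    "\<forall>i\<in>?Zs \<times> R. convergent (\<lambda>j. \<integral>\<omega>. F (r j) (\<omega>, fst i) (snd i) \<partial>M)"
    by blast
  show ?thesis
  proof (rule underK_le_of_AE_mean_exp_le[where G = "\<lambda>j. gk (\<phi> (r j))" and F = "\<lambda>j. F (r j)"
        and m = "\<lambda>zs z. lim (\<lambda>j. \<integral>\<omega>. F (r j) (\<omega>, zs) z \<partial>M)", OF es fR Rne g])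
    show "(\<lambda>j. \<integral>\<omega>. \<bar>gk (\<phi> (r j)) (\<omega>, zs) - g (\<omega>, zs)\<bar> \<partial>M) \<longlonglongrightarrow> 0" if "zs \<in> lists R" "length zs = l" for zs
      using LIMSEQ_subseq_LIMSEQ[OF L1_\<phi> r(1)] that by (simp add: o_def)
    have "AE \<omega> in M. \<forall>zs\<in>?Zs. (\<lambda>j. gk (\<phi> (r j)) (\<omega>, zs)) \<longlonglongrightarrow> g (\<omega>, zs)"
      using r(2) finite_windows[OF fR] by (intro AE_finite_allI) auto
    then show "AE \<omega> in M. \<forall>zs. zs \<in> lists R \<and> length zs = l \<longrightarrow> (\<lambda>j. gk (\<phi> (r j)) (\<omega>, zs)) \<longlonglongrightarrow> g (\<omega>, zs)"
      by (rule eventually_mono) auto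
    show "(\<lambda>j. \<integral>\<omega>. F (r j) (\<omega>, zs) z \<partial>M) \<longlonglongrightarrow> lim (\<lambda>j. \<integral>\<omega>. F (r j) (\<omega>, zs) z \<partial>M)"
      if "zs \<in> lists R" "length zs = l" "z \<in> R" for zs z
      using r(3) that by (auto simp: convergent_LIMSEQ_iff)
    show "AE \<omega> in M. \<forall>j zs. zs \<in> lists R \<and> length zs = l \<longrightarrow>
        (\<Sum>z\<in>R. exp (gk (\<phi> (r j)) (\<omega>, zs) + F (r j) (\<omega>, zs) z) / real (card R)) \<le> exp c"
      using bound by (rule eventually_mono) blast
    show "integrable M (\<lambda>\<omega>. gk (\<phi> (r j)) (\<omega>, zs))" if "zs \<in> lists R" "length zs = l" for j zs
      using gk that .
    show "classK M T R l (F (r j))" for j by (rule FK)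
  qed
qed

theorem lemma2p14:
  fixes M :: "'a measure" and T :: "int^'d \<Rightarrow> 'a \<Rightarrow> 'a" and R :: "(int^'d) set"
    and l :: nat and gk :: "nat \<Rightarrow> 'a \<times> (int^'d) list \<Rightarrow> real" and g :: "'a \<times> (int^'d) list \<Rightarrow> real"
  assumes "finite R" and "R \<noteq> {}"
    and "ergodic_system M T R"
    and "\<And>k zs. zs \<in> lists R \<Longrightarrow> length zs = l \<Longrightarrow> integrable M (\<lambda>\<omega>. gk k (\<omega>, zs))"
    and "\<And>zs. zs \<in> lists R \<Longrightarrow> length zs = l \<Longrightarrow> integrable M (\<lambda>\<omega>. g (\<omega>, zs))"
    and "\<And>zs. zs \<in> lists R \<Longrightarrow> length zs = l \<Longrightarrow>
           (\<lambda>k. \<integral>\<omega>. \<bar>gk k (\<omega>, zs) - g (\<omega>, zs)\<bar> \<partial>M) \<longlonglongrightarrow> 0"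
  shows "underK M T R l g \<le> liminf (\<lambda>k. underK M T R l (gk k))"
proof (rule ccontr)
  assume "\<not> underK M T R l g \<le> liminf (\<lambda>k. underK M T R l (gk k))"
  then have "liminf (\<lambda>k. underK M T R l (gk k)) < underK M T R l g" by simp
  then obtain c where c: "liminf (\<lambda>k. underK M T R l (gk k)) < ereal c" "ereal c < underK M T R l g"
    using ereal_dense2 by blast
  have "underK M T R l g \<le> ereal c" by (rule underK_le_of_liminf_less[OF assms c(1)])
  with c(2) show False by simp
qed

end
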